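(* Let $\Sigma$ be a language consisting only of $0$-ary and unary predicate symbols, containing at least one unary predicate symbol, and let $\mathcal{T}_\Sigma$ be the family of all complete theories in $\Sigma$. If $\Sigma$ consists of $k\in\omega$ unary predicate symbols and $m\in\omega$ $0$-ary predicate symbols, then ${\rm RS}(\mathcal{T}_\Sigma)=2^k$ and ${\rm ds}(\mathcal{T}_\Sigma)=2^m$. If $\Sigma$ has infinitely many symbols, then ${\rm RS}(\mathcal{T}_\Sigma)=\infty$.
   Context: Theories are complete consistent first-order theories; structures have nonempty universes. For a family $\mathcal{T}$ of theories and a sentence $\varphi$ of its language, $\mathcal{T}_\varphi=\{T\in\mathcal{T}\mid\varphi\in T\}$. The rank ${\rm RS}$ of a family is defined as follows: ${\rm RS}(\emptyset)=-1$; ${\rm RS}(\mathcal{T})=0$ for finite nonempty $\mathcal{T}$; ${\rm RS}(\mathcal{T})\ge 1$ for infinite $\mathcal{T}$; for $\alpha=\beta+1$, ${\rm RS}(\mathcal{T})\ge\alpha$ iff there are pairwise inconsistent sentences $\varphi_n$, $n\in\omega$, of the language of $\mathcal{T}$ with ${\rm RS}(\mathcal{T}_{\varphi_n})\ge\beta$ for all $n$; for limit $\alpha$, ${\rm RS}(\mathcal{T})\ge\alpha$ iff ${\rm RS}(\mathcal{T})\ge\beta$ for all $\beta<\alpha$; ${\rm RS}(\mathcal{T})=\alpha$ iff ${\rm RS}(\mathcal{T})\ge\alpha$ and not ${\rm RS}(\mathcal{T})\ge\alpha+1$; ${\rm RS}(\mathcal{T})=\infty$ if ${\rm RS}(\mathcal{T})\ge\alpha$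 for every ordinal $\alpha$. If ${\rm RS}(\mathcal{T})=\alpha$ is an ordinal $\ge0$, the degree ${\rm ds}(\mathcal{T})$ is the maximal number of pairwise inconsistent sentences $\varphi_i$ with ${\rm RS}(\mathcal{T}_{\varphi_i})=\alpha$. *)

theory Defs
  imports Main
begin

text \<open>A language Sigma is given by a set Z of 0-ary predicate symbols and a set U of
unary predicate symbols (both subsets of a symbol type 's).  Variables are natural numbers.\<close>

datatype 's fm =
    Prop 's
  | Pred 's nat
  | Eq nat nat
  | Neg "'s fm"
  | Conj "'s fm" "'s fm"
  | Ex nat "'s fm"

fun freevars :: "'s fm \<Rightarrow> nat set" where
  "freevars (Prop p) = {}"
| "freevars (Pred P x) = {x}"
| "freevars (Eq x y) = {x, y}"
| "freevars (Neg f) = freevars f"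
| "freevars (Conj f g) = freevars f \<union> freevars g"
| "freevars (Ex x f) = freevars f - {x}"

fun in_lang :: "'s set \<Rightarrow> 's set \<Rightarrow> 's fm \<Rightarrow> bool" where
  "in_lang Z U (Prop p) = (p \<in> Z)"
| "in_lang Z U (Pred P x) = (P \<in> U)"
| "in_lang Z U (Eq x y) = True"
| "in_lang Z U (Neg f) = in_lang Z U f"
| "in_lang Z U (Conj f g) = (in_lang Z U f \<and> in_lang Z U g)"
| "in_lang Z U (Ex x f) = in_lang Z U f"

definition sentences :: "'s set \<Rightarrow> 's set \<Rightarrow> 's fm set" where
  "sentences Z U = {f. in_lang Z U f \<and> freevars f = {}}"

text \<open>Structures: a universe D (a set of elements of type 's \<times> nat), an interpretation of
0-ary predicates as truth values and of unary predicates as subsets of D.  The element type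
's \<times> nat has cardinality at least |Sigma| + aleph_0, so by downward Loewenheim-Skolem every
consistent theory of the language has a model of this form.\<close>

type_synonym 's struct = "('s \<times> nat) set \<times> ('s \<Rightarrow> bool) \<times> ('s \<Rightarrow> 's \<times> nat \<Rightarrow> bool)"

definition is_struct :: "'s struct \<Rightarrow> bool" where
  "is_struct M \<longleftrightarrow> fst M \<noteq> {}"

fun sat :: "'s struct \<Rightarrow> (nat \<Rightarrow> 's \<times> nat) \<Rightarrow> 's fm \<Rightarrow> bool" where
  "sat (D, P0, P1) e (Prop p) = P0 p"
| "sat (D, P0, P1) e (Pred P x) = P1 P (e x)"
| "sat (D, P0, P1) e (Eq x y) = (e x = e y)"
| "sat (D, P0, P1) e (Neg f) = (\<not> sat (D, P0, P1) e f)"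
| "sat (D, P0, P1) e (Conj f g) = (sat (D, P0, P1) e f \<and> sat (D, P0, P1) e g)"
| "sat (D, P0, P1) e (Ex x f) = (\<exists>a\<in>D. sat (D, P0, P1) (e(x := a)) f)"

definition models :: "'s struct \<Rightarrow> 's fm \<Rightarrow> bool" where
  "models M f \<longleftrightarrow> (\<forall>e. range e \<subseteq> fst M \<longrightarrow> sat M e f)"

definition complete_theory :: "'s set \<Rightarrow> 's set \<Rightarrow> 's fm set \<Rightarrow> bool" where
  "complete_theory Z U T \<longleftrightarrow>
     T \<subseteq> sentences Z U
   \<and> (\<exists>M. is_struct M \<and> (\<forall>g\<in>T. models M g))
   \<and> (\<forall>f\<in>sentences Z U. f \<in> T \<or> Neg f \<in> T)
   \<and> (\<forall>f\<in>sentences Z U.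
        (\<forall>M. is_struct M \<longrightarrow> (\<forall>g\<in>T. models M g) \<longrightarrow> models M f) \<longrightarrow> f \<in> T)"

definition all_theories :: "'s set \<Rightarrow> 's set \<Rightarrow> 's fm set set" where
  "all_theories Z U = {T. complete_theory Z U T}"

definition restr :: "'s fm set set \<Rightarrow> 's fm \<Rightarrow> 's fm set set" where
  "restr F f = {T \<in> F. f \<in> T}"

definition inconsistent2 :: "'s fm \<Rightarrow> 's fm \<Rightarrow> bool" where
  "inconsistent2 f g \<longleftrightarrow> \<not> (\<exists>M. is_struct M \<and> models M f \<and> models M g)"

text \<open>One step of the recursive definition of "RS(F) \<ge> a".  The least element plays the
role of 0, its immediate successor the role of 1.\<close>

definition is_least :: "'o::wellorder \<Rightarrow> bool" where
  "is_least a \<longleftrightarrow> (\<forall>b. a \<le> b)"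

definition is_succ_of :: "'o::wellorder \<Rightarrow> 'o \<Rightarrow> bool" where
  "is_succ_of a b \<longleftrightarrow> b < a \<and> \<not> (\<exists>c. b < c \<and> c < a)"

definition rs_step ::
  "'s set \<Rightarrow> 's set \<Rightarrow> ('o::wellorder \<Rightarrow> 's fm set set \<Rightarrow> bool) \<Rightarrow> 'o \<Rightarrow> 's fm set set \<Rightarrow> bool" where
  "rs_step Z U R a F =
    (if is_least a then F \<noteq> {}
     else if (\<exists>b. is_least b \<and> is_succ_of a b) then infinite F
     else if (\<exists>b. is_succ_of a b) then
       (\<exists>\<phi>::nat \<Rightarrow> 's fm. (\<forall>n. \<phi> n \<in> sentences Z U)
          \<and> (\<forall>i j. i \<noteq> j \<longrightarrow> inconsistent2 (\<phi> i) (\<phi> j))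
          \<and> (\<forall>n. R (THE b. is_succ_of a b) (restr F (\<phi> n))))
     else (\<forall>b<a. R b F))"

definition rs_ge :: "'s set \<Rightarrow> 's set \<Rightarrow> 's fm set set \<Rightarrow> 'o::wellorder \<Rightarrow> bool" where
  "rs_ge Z U F a = wfrec {(b, c). b < c} (rs_step Z U) a F"

definition rs_eq :: "'s set \<Rightarrow> 's set \<Rightarrow> 's fm set set \<Rightarrow> nat \<Rightarrow> bool" where
  "rs_eq Z U F n \<longleftrightarrow> rs_ge Z U F n \<and> \<not> rs_ge Z U F (Suc n)"

definition ds_eq :: "'s set \<Rightarrow> 's set \<Rightarrow> 's fm set set \<Rightarrow> nat \<Rightarrow> bool" where
  "ds_eq Z U F d \<longleftrightarrow> (\<exists>n. rs_eq Z U F n \<and>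
     (\<exists>\<Phi>. finite \<Phi> \<and> card \<Phi> = d \<and> \<Phi> \<subseteq> sentences Z U
        \<and> (\<forall>f\<in>\<Phi>. \<forall>g\<in>\<Phi>. f \<noteq> g \<longrightarrow> inconsistent2 f g)
        \<and> (\<forall>f\<in>\<Phi>. rs_eq Z U (restr F f) n))
   \<and> (\<forall>\<Phi>. \<Phi> \<subseteq> sentences Z U
        \<and> (\<forall>f\<in>\<Phi>. \<forall>g\<in>\<Phi>. f \<noteq> g \<longrightarrow> inconsistent2 f g)
        \<and> (\<forall>f\<in>\<Phi>. rs_eq Z U (restr F f) n)
        \<longrightarrow> finite \<Phi> \<and> card \<Phi> \<le> d))"

end

(* A structure in a language of 0-ary and unary predicates is described by the truth values of
   the 0-ary symbols and, for every colour S \<subseteq> U (the set of unary predicates an element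
   satisfies), the number of elements of colour S.  An Ehrenfeucht-Fraisse argument shows that a
   sentence of quantifier depth q only sees these numbers truncated at q.

   For finite U there are 2^k colours.  Letting the sizes of j colours range independently over
   the finite numbers, and splitting by the sentences "there are exactly c elements of colour S",
   gives RS >= j, hence RS >= 2^k.  Conversely, by induction on j, RS(G) >= j yields for every q a
   theory in G with at least j colours of size >= q: otherwise the "large" colours stabilise,
   making them infinite preserves the splitting sentences, and there are only finitely many such
   canonical structures.  So RS = 2^k, and a sentence of maximal rank holds in a structure with
   all colours infinite, which is determined by the 0-ary symbols; this gives ds = 2^m.

   For infinitely many symbols, enumerate atoms "p" and "Ex x. P x".  The theories with prescribed
   truth values of the first few atoms are split by the patterns "i more true atoms, then a false
   one" (i \<in> \<nat>) into infinitely many families of the same kind, so the rank exceeds every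
   ordinal. *)

theory Submission
  imports Defs "HOL-Library.Nat_Bijection"
begin

lemma the_succ_eq:
  fixes a :: "'o::wellorder"
  assumes "is_succ_of a b"
  shows "(THE b. is_succ_of a b) = b"
proof (rule the_equality)
  show "is_succ_of a b" by (rule assms)
  fix c assume "is_succ_of a c"
  then have "\<not> c < b" "\<not> b < c" using assms unfolding is_succ_of_def by blast+
  then show "c = b" by simp
qed

lemma the_succ_less:
  fixes a :: "'o::wellorder"
  assumes "is_succ_of a b"
  shows "(THE b. is_succ_of a b) < a"
proof -
  have "(THE b. is_succ_of a b) = b" by (rule the_succ_eq[OF assms])
  then show ?thesis using assms by (simp add: is_succ_of_def)
qed

lemma rs_step_cong:
  fixes a :: "'o::wellorder"
  assumes "\<And>b. b < a \<Longrightarrow> R b = R' b"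
  shows "rs_step Z U R a F = rs_step Z U R' a F"
proof (cases "\<exists>b. is_succ_of a b")
  case True
  moreover have "R (THE b. is_succ_of a b) = R' (THE b. is_succ_of a b)"
    using True the_succ_less assms by metis
  ultimately show ?thesis unfolding rs_step_def by (simp only: simp_thms if_True)
next
  case False
  moreover have "(\<forall>b<a. R b F) = (\<forall>b<a. R' b F)" using assms by simp
  ultimately show ?thesis unfolding rs_step_def by (simp only: simp_thms if_False)
qed

lemma rs_ge_unfold: "rs_ge Z U F a = rs_step Z U (\<lambda>b G. rs_ge Z U G b) a F"
proof -
  have "rs_ge Z U F a =
      rs_step Z U (cut (wfrec {(b, c). b < c} (rs_step Z U)) {(b, c). b < c} a) a F"
    unfolding rs_ge_def by (subst wfrec[OF wf], rule refl)
  also have "\<dots> = rs_step Z U (\<lambda>b G. rs_ge Z U G b) a F"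
    by (rule rs_step_cong) (simp add: cut_apply rs_ge_def[abs_def])
  finally show ?thesis .
qed

lemma rs_ge_least: "is_least a \<Longrightarrow> rs_ge Z U F a \<longleftrightarrow> F \<noteq> {}"
  by (subst rs_ge_unfold) (simp add: rs_step_def)

lemma is_succ_of_unique:
  fixes a :: "'o::wellorder"
  shows "is_succ_of a b \<Longrightarrow> is_succ_of a b' \<Longrightarrow> b' = b"
  using the_succ_eq by metis

lemma not_is_least_if_succ: "is_succ_of a b \<Longrightarrow> \<not> is_least a"
  by (auto simp: is_succ_of_def is_least_def not_le)

lemma rs_ge_succ_least:
  fixes a :: "'o::wellorder"
  assumes "is_least b" "is_succ_of a b"
  shows "rs_ge Z U F a \<longleftrightarrow> infinite F"
  using assms not_is_least_if_succ[OF assms(2)] by (subst rs_ge_unfold) (auto simp: rs_step_def)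

lemma rs_ge_succ:
  fixes a :: "'o::wellorder"
  assumes "\<not> is_least b" "is_succ_of a b"
  shows "rs_ge Z U F a \<longleftrightarrow>
    (\<exists>\<phi>::nat \<Rightarrow> 's fm. (\<forall>n. \<phi> n \<in> sentences Z U)
       \<and> (\<forall>i j. i \<noteq> j \<longrightarrow> inconsistent2 (\<phi> i) (\<phi> j))
       \<and> (\<forall>n. rs_ge Z U (restr F (\<phi> n)) b))"
proof -
  have "\<not> (\<exists>b'. is_least b' \<and> is_succ_of a b')" using assms is_succ_of_unique by metis
  then show ?thesis using assms not_is_least_if_succ[OF assms(2)]
    by (subst rs_ge_unfold) (auto simp: rs_step_def the_succ_eq)
qed

lemma rs_ge_limit:
  fixes a :: "'o::wellorder"
  assumes "\<not> is_least a" "\<not> (\<exists>b. is_succ_of a b)"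
  shows "rs_ge Z U F a \<longleftrightarrow> (\<forall>b<a. rs_ge Z U F b)"
  using assms by (subst rs_ge_unfold) (auto simp: rs_step_def)

lemma is_succ_of_nat_iff: "is_succ_of (a::nat) b \<longleftrightarrow> a = Suc b"
  unfolding is_succ_of_def by (auto simp: not_less_eq)

lemma is_least_nat_iff: "is_least (a::nat) \<longleftrightarrow> a = 0"
  by (auto simp: is_least_def)

lemma rs_ge_Suc_0: "rs_ge Z U F (Suc 0) \<longleftrightarrow> infinite F"
  by (rule rs_ge_succ_least[of 0]) (simp_all add: is_least_nat_iff is_succ_of_nat_iff)

lemma rs_ge_Suc_Suc: "rs_ge Z U F (Suc (Suc n)) \<longleftrightarrow>
  (\<exists>\<phi>::nat \<Rightarrow> 's fm. (\<forall>n. \<phi> n \<in> sentences Z U)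
     \<and> (\<forall>i j. i \<noteq> j \<longrightarrow> inconsistent2 (\<phi> i) (\<phi> j))
     \<and> (\<forall>i. rs_ge Z U (restr F (\<phi> i)) (Suc n)))"
  by (rule rs_ge_succ[of "Suc n"]) (simp_all add: is_least_nat_iff is_succ_of_nat_iff)

lemma sat_cong_freevars:
  "(\<And>x. x \<in> freevars f \<Longrightarrow> e x = e' x) \<Longrightarrow> sat (D, A, B) e f = sat (D, A, B) e' f"
proof (induction f arbitrary: e e')
  case (Neg f)
  have "sat (D, A, B) e f = sat (D, A, B) e' f" by (rule Neg.IH) (use Neg.prems in simp)
  then show ?case by simp
next
  case (Conj f g)
  have "sat (D, A, B) e f = sat (D, A, B) e' f" by (rule Conj.IH(1)) (use Conj.prems in simp)
  moreover have "sat (D, A, B) e g = sat (D, A, B) e' g" by (rule Conj.IH(2)) (use Conj.prems in simp)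
  ultimately show ?case by simp
next
  case (Ex x f)
  have "sat (D, A, B) (e(x := a)) f = sat (D, A, B) (e'(x := a)) f" for a
    by (rule Ex.IH) (use Ex.prems in auto)
  then show ?case by simp
qed simp_all

lemma sat_sentence_indep:
  assumes "freevars f = {}" shows "sat M e f = sat M e' f"
proof -
  obtain D A B where "M = (D, A, B)" by (cases M)
  then show ?thesis using sat_cong_freevars[of f e e' D A B] assms by simp
qed

lemma struct_has_assignment:
  assumes "is_struct M"
  obtains e :: "nat \<Rightarrow> 's \<times> nat" where "range e \<subseteq> fst M"
proof -
  obtain d where "d \<in> fst M" using assms unfolding is_struct_def by blast
  then show ?thesis using that[of "\<lambda>_. d"] by blast
qed

lemma models_iff_sat:
  fixes M :: "'s struct"
  assumes "freevars f = {}" "range e \<subseteq> fst M"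
  shows "models M f \<longleftrightarrow> sat M e f"
  using assms sat_sentence_indep[OF assms(1), of M e] unfolding models_def by blast

lemma models_Neg:
  fixes M :: "'s struct"
  assumes "is_struct M" "freevars f = {}"
  shows "models M (Neg f) \<longleftrightarrow> \<not> models M f"
proof -
  obtain e :: "nat \<Rightarrow> 's \<times> nat" where e: "range e \<subseteq> fst M"
    using struct_has_assignment[OF assms(1)] by blast
  obtain D A B where M: "M = (D, A, B)" by (cases M)
  have "models M (Neg f) \<longleftrightarrow> sat M e (Neg f)" by (rule models_iff_sat) (use assms(2) e in simp_all)
  also have "\<dots> \<longleftrightarrow> \<not> sat M e f" by (simp add: M)
  also have "\<dots> \<longleftrightarrow> \<not> models M f" using models_iff_sat[OF assms(2) e] by simp
  finally show ?thesis .
qed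

lemma models_Conj:
  fixes M :: "'s struct"
  assumes "is_struct M" "freevars f = {}" "freevars g = {}"
  shows "models M (Conj f g) \<longleftrightarrow> models M f \<and> models M g"
proof -
  obtain e :: "nat \<Rightarrow> 's \<times> nat" where e: "range e \<subseteq> fst M"
    using struct_has_assignment[OF assms(1)] by blast
  obtain D A B where M: "M = (D, A, B)" by (cases M)
  have "models M (Conj f g) \<longleftrightarrow> sat M e (Conj f g)" by (rule models_iff_sat) (use assms(2,3) e in simp_all)
  also have "\<dots> \<longleftrightarrow> sat M e f \<and> sat M e g" by (simp add: M)
  also have "\<dots> \<longleftrightarrow> models M f \<and> models M g"
    using models_iff_sat[OF assms(2) e] models_iff_sat[OF assms(3) e] by simp
  finally show ?thesis .
qed

definition theory_of :: "'s set \<Rightarrow> 's set \<Rightarrow> 's struct \<Rightarrow> 's fm set" where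
  "theory_of Z U M = {f \<in> sentences Z U. models M f}"

lemma mem_theory_of: "f \<in> theory_of Z U M \<longleftrightarrow> f \<in> sentences Z U \<and> models M f"
  by (simp add: theory_of_def)

lemma complete_theory_of: "is_struct M \<Longrightarrow> complete_theory Z U (theory_of Z U M)"
  unfolding complete_theory_def
proof (intro conjI ballI impI)
  assume M: "is_struct M"
  show "theory_of Z U M \<subseteq> sentences Z U" by (auto simp: theory_of_def)
  show "\<exists>M'. is_struct M' \<and> (\<forall>g\<in>theory_of Z U M. models M' g)"
    using M by (intro exI[of _ M]) (simp add: theory_of_def)
  fix f assume f: "f \<in> sentences Z U"
  then show "f \<in> theory_of Z U M \<or> Neg f \<in> theory_of Z U M"
    using M models_Neg[OF M] by (auto simp: theory_of_def sentences_def)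
next
  fix f assume M: "is_struct M" and "f \<in> sentences Z U"
    and "\<forall>M'. is_struct M' \<longrightarrow> (\<forall>g\<in>theory_of Z U M. models M' g) \<longrightarrow> models M' f"
  moreover have "\<forall>g\<in>theory_of Z U M. models M g" by (simp add: theory_of_def)
  ultimately have "models M f" by blast
  then show "f \<in> theory_of Z U M" using \<open>f \<in> sentences Z U\<close> by (simp add: theory_of_def)
qed

lemma complete_theory_is_theory_of:
  assumes "complete_theory Z U T"
  obtains M where "is_struct M" "T = theory_of Z U M"
proof -
  from assms obtain M where M: "is_struct M" "\<forall>g\<in>T. models M g"
    and sub: "T \<subseteq> sentences Z U" and compl: "\<forall>f\<in>sentences Z U. f \<in> T \<or> Neg f \<in> T"
    unfolding complete_theory_def by blast
  have "f \<in> T" if "f \<in> sentences Z U" "models M f" for f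
    using that compl M models_Neg[OF M(1)] by (auto simp: sentences_def)
  then have "T = theory_of Z U M" using M sub by (auto simp: theory_of_def)
  then show ?thesis using M that by blast
qed

lemma all_theories_eq: "all_theories Z U = theory_of Z U ` {M. is_struct M}"
proof
  show "all_theories Z U \<subseteq> theory_of Z U ` {M. is_struct M}"
  proof
    fix T assume "T \<in> all_theories Z U"
    then obtain M where "is_struct M" "T = theory_of Z U M"
      unfolding all_theories_def by (blast elim: complete_theory_is_theory_of)
    then show "T \<in> theory_of Z U ` {M. is_struct M}" by blast
  qed
  show "theory_of Z U ` {M. is_struct M} \<subseteq> all_theories Z U"
    unfolding all_theories_def by (auto intro: complete_theory_of)
qed

lemma theory_of_in_all_theories: "is_struct M \<Longrightarrow> theory_of Z U M \<in> all_theories Z U"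
  by (simp add: all_theories_eq)

lemma inconsistent2I:
  "(\<And>M. is_struct M \<Longrightarrow> models M f \<Longrightarrow> models M g \<Longrightarrow> False) \<Longrightarrow>
    inconsistent2 f g"
  unfolding inconsistent2_def by blast

definition trunc_card :: "nat \<Rightarrow> 'a set \<Rightarrow> nat" where
  "trunc_card q A = (if finite A then min (card A) q else q)"

lemma trunc_card_le: "trunc_card q A \<le> q"
  by (simp add: trunc_card_def)

lemma trunc_card_min: "p \<le> q \<Longrightarrow> trunc_card p A = min (trunc_card q A) p"
  by (auto simp: trunc_card_def min_def)

lemma trunc_card_eq_bound_mono: "p \<le> q \<Longrightarrow> trunc_card q A = q \<Longrightarrow> trunc_card p A = p"
  using trunc_card_min by (metis min.absorb2)

lemma trunc_card_less_bound: "trunc_card q A < q \<Longrightarrow> finite A \<and> card A = trunc_card q A"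
  by (auto simp: trunc_card_def split: if_splits)

lemma trunc_card_empty: "trunc_card q {} = 0"
  by (simp add: trunc_card_def)

lemma trunc_card_infinite: "infinite A \<Longrightarrow> trunc_card q A = q"
  by (simp add: trunc_card_def)

lemma trunc_card_lessThan: "trunc_card q {..<c::nat} = min c q"
  by (simp add: trunc_card_def)

lemma trunc_card_image: "inj_on f A \<Longrightarrow> trunc_card q (f ` A) = trunc_card q A"
  by (simp add: trunc_card_def card_image finite_image_iff)

lemma one_le_trunc_card_iff: "1 \<le> q \<Longrightarrow> 1 \<le> trunc_card q A \<longleftrightarrow> A \<noteq> {}"
  by (cases "finite A") (auto simp: trunc_card_def Suc_le_eq card_gt_0_iff)

lemma trunc_card_insert: "a \<notin> A \<Longrightarrow> trunc_card q (insert a A) = min (Suc (trunc_card q A)) q"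
  by (auto simp: trunc_card_def min_def)

lemma trunc_card_remove:
  assumes "a \<in> A" "1 \<le> q"
  shows "trunc_card (q - 1) (A - {a}) = trunc_card q A - 1"
proof (cases "finite A")
  case True
  then have "card A \<ge> 1" using assms(1) by (metis One_nat_def Suc_leI card_gt_0_iff empty_iff)
  then show ?thesis using True assms(1) by (simp add: trunc_card_def card_Diff_singleton)
qed (simp add: trunc_card_def)

lemma trunc_card_Suc_eq: "trunc_card (Suc n) A = Suc n \<longleftrightarrow> (\<exists>a\<in>A. trunc_card n (A - {a}) = n)"
proof
  assume h: "trunc_card (Suc n) A = Suc n"
  then obtain a where a: "a \<in> A" using one_le_trunc_card_iff[of "Suc n" A] by auto
  have "trunc_card n (A - {a}) = trunc_card (Suc n) A - 1" using trunc_card_remove[OF a, of "Suc n"] by simp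
  then show "\<exists>a\<in>A. trunc_card n (A - {a}) = n" using a h by auto
next
  assume "\<exists>a\<in>A. trunc_card n (A - {a}) = n"
  then obtain a where a: "a \<in> A" and h: "trunc_card n (A - {a}) = n" by blast
  have "trunc_card n (A - {a}) = trunc_card (Suc n) A - 1" using trunc_card_remove[OF a, of "Suc n"] by simp
  moreover have "trunc_card (Suc n) A \<le> Suc n" by (rule trunc_card_le)
  moreover have "1 \<le> trunc_card (Suc n) A" using a one_le_trunc_card_iff[of "Suc n" A] by auto
  ultimately show "trunc_card (Suc n) A = Suc n" using h by linarith
qed

section \<open>An Ehrenfeucht-Fraisse game for unary languages\<close>

definition colour :: "'s set \<Rightarrow> ('s \<Rightarrow> 's \<times> nat \<Rightarrow> bool) \<Rightarrow> 's \<times> nat \<Rightarrow> 's set"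
  where
  "colour U B d = {P \<in> U. B P d}"

definition colour_class ::
  "'s set \<Rightarrow> ('s \<times> nat) set \<Rightarrow> ('s \<Rightarrow> 's \<times> nat \<Rightarrow> bool) \<Rightarrow> 's set \<Rightarrow> ('s \<times> nat) set"
  where
  "colour_class U D B S = {d \<in> D. colour U B d = S}"

fun qdepth :: "'s fm \<Rightarrow> nat" where
  "qdepth (Prop p) = 0"
| "qdepth (Pred P x) = 0"
| "qdepth (Eq x y) = 0"
| "qdepth (Neg f) = qdepth f"
| "qdepth (Conj f g) = max (qdepth f) (qdepth g)"
| "qdepth (Ex x f) = Suc (qdepth f)"

text \<open>The position of a \<open>q\<close>-round Ehrenfeucht-Fraisse game on the universes \<open>D1\<close>, \<open>D2\<close>
  with the variables in \<open>V\<close> placed at \<open>e1\<close>, \<open>e2\<close> is a win for the duplicator once the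
  placed elements have the same equalities and colours and each colour class has, outside
  them, the same size up to \<open>q\<close>.\<close>
definition game_equiv :: "'s set \<Rightarrow> nat \<Rightarrow> nat set
    \<Rightarrow> ('s \<times> nat) set \<Rightarrow> ('s \<Rightarrow> 's \<times> nat \<Rightarrow> bool) \<Rightarrow> (nat \<Rightarrow> 's \<times> nat)
    \<Rightarrow> ('s \<times> nat) set \<Rightarrow> ('s \<Rightarrow> 's \<times> nat \<Rightarrow> bool) \<Rightarrow> (nat \<Rightarrow> 's \<times> nat) \<Rightarrow> bool" where
  "game_equiv U q V D1 B1 e1 D2 B2 e2 \<longleftrightarrow>
     (\<forall>x\<in>V. \<forall>y\<in>V. (e1 x = e1 y) = (e2 x = e2 y))
   \<and> (\<forall>x\<in>V. colour U B1 (e1 x) = colour U B2 (e2 x))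
   \<and> (\<forall>S. trunc_card q (colour_class U D1 B1 S - e1 ` V) =
          trunc_card q (colour_class U D2 B2 S - e2 ` V))"

lemma Diff_eq_if_insert:
  "A - E = (if a \<in> A \<and> a \<notin> E then insert a (A - insert a E) else A - insert a E)"
  by auto

lemma game_equiv_sym: "game_equiv U q V D1 B1 e1 D2 B2 e2 \<Longrightarrow> game_equiv U q V D2 B2 e2 D1 B1 e1"
  unfolding game_equiv_def by metis

lemma game_equiv_forget:
  assumes g: "game_equiv U q V D1 B1 e1 D2 B2 e2" and r1: "range e1 \<subseteq> D1" and r2: "range e2 \<subseteq> D2"
  shows "game_equiv U q (V - {x}) D1 B1 e1 D2 B2 e2"
proof (cases "x \<in> V")
  case False then show ?thesis using g by simp
next
  case True
  have eq: "\<forall>u\<in>V. \<forall>v\<in>V. (e1 u = e1 v) = (e2 u = e2 v)"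
    and col: "\<forall>u\<in>V. colour U B1 (e1 u) = colour U B2 (e2 u)"
    and t: "\<forall>S. trunc_card q (colour_class U D1 B1 S - e1 ` V) = trunc_card q (colour_class U D2 B2 S - e2 ` V)"
    using g unfolding game_equiv_def by blast+
  have "trunc_card q (colour_class U D1 B1 S - e1 ` (V - {x})) =
      trunc_card q (colour_class U D2 B2 S - e2 ` (V - {x}))" for S
  proof -
    let ?c = "e1 x \<in> colour_class U D1 B1 S \<and> e1 x \<notin> e1 ` (V - {x})"
    have c: "?c = (e2 x \<in> colour_class U D2 B2 S \<and> e2 x \<notin> e2 ` (V - {x}))"
    proof -
      have "(e1 x \<in> colour_class U D1 B1 S) = (e2 x \<in> colour_class U D2 B2 S)"
        using col True r1 r2 by (auto simp: colour_class_def)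
      moreover have "(e1 x \<notin> e1 ` (V - {x})) = (e2 x \<notin> e2 ` (V - {x}))"
        using eq True by auto
      ultimately show ?thesis by simp
    qed
    have s1: "colour_class U D1 B1 S - e1 ` (V - {x}) =
        (if ?c then insert (e1 x) (colour_class U D1 B1 S - e1 ` V) else colour_class U D1 B1 S - e1 ` V)"
    proof -
      have h: "insert (e1 x) (e1 ` (V - {x})) = e1 ` V" using True by blast
      then show ?thesis using Diff_eq_if_insert[of "colour_class U D1 B1 S" "e1 ` (V - {x})" "e1 x"]
        by (simp only: h)
    qed
    have s2: "colour_class U D2 B2 S - e2 ` (V - {x}) =
        (if ?c then insert (e2 x) (colour_class U D2 B2 S - e2 ` V) else colour_class U D2 B2 S - e2 ` V)"
    proof -
      have h: "insert (e2 x) (e2 ` (V - {x})) = e2 ` V" using True by blast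
      then show ?thesis unfolding c
        using Diff_eq_if_insert[of "colour_class U D2 B2 S" "e2 ` (V - {x})" "e2 x"] by (simp only: h)
    qed
    have n1: "e1 x \<notin> colour_class U D1 B1 S - e1 ` V" using True by auto
    have n2: "e2 x \<notin> colour_class U D2 B2 S - e2 ` V" using True by auto
    show ?thesis unfolding s1 s2 using t trunc_card_insert[OF n1] trunc_card_insert[OF n2] by simp
  qed
  then show ?thesis using eq col unfolding game_equiv_def by blast
qed

lemma game_equiv_extend_old:
  assumes g: "game_equiv U q W D1 B1 e1 D2 B2 e2" and x: "x \<notin> W" and y: "y \<in> W"
  shows "game_equiv U (q - 1) (insert x W) D1 B1 (e1(x := e1 y)) D2 B2 (e2(x := e2 y))"
  unfolding game_equiv_def
proof (intro conjI ballI allI)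
  have eq: "\<forall>u\<in>W. \<forall>v\<in>W. (e1 u = e1 v) = (e2 u = e2 v)"
    and col: "\<forall>u\<in>W. colour U B1 (e1 u) = colour U B2 (e2 u)"
    and t: "\<forall>S. trunc_card q (colour_class U D1 B1 S - e1 ` W) = trunc_card q (colour_class U D2 B2 S - e2 ` W)"
    using g unfolding game_equiv_def by blast+
  define \<sigma> where "\<sigma> u = (if u = x then y else u)" for u
  have s: "(e1(x := e1 y)) u = e1 (\<sigma> u)" "(e2(x := e2 y)) u = e2 (\<sigma> u)" for u
    by (simp_all add: \<sigma>_def)
  have sW: "u \<in> insert x W \<Longrightarrow> \<sigma> u \<in> W" for u using y by (auto simp: \<sigma>_def)
  fix u v assume "u \<in> insert x W" "v \<in> insert x W"
  then show "((e1(x := e1 y)) u = (e1(x := e1 y)) v) = ((e2(x := e2 y)) u = (e2(x := e2 y)) v)"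
    "colour U B1 ((e1(x := e1 y)) u) = colour U B2 ((e2(x := e2 y)) u)"
    unfolding s using sW eq col by blast+
next
  have t: "\<forall>S. trunc_card q (colour_class U D1 B1 S - e1 ` W) = trunc_card q (colour_class U D2 B2 S - e2 ` W)"
    using g unfolding game_equiv_def by blast
  have im: "(e(x := e y)) ` insert x W = e ` W" for e :: "nat \<Rightarrow> 's \<times> nat" using x y by auto
  fix S
  show "trunc_card (q - 1) (colour_class U D1 B1 S - (e1(x := e1 y)) ` insert x W) =
    trunc_card (q - 1) (colour_class U D2 B2 S - (e2(x := e2 y)) ` insert x W)"
  proof -
    have m: "\<And>A. trunc_card (q - 1) A = min (trunc_card q A) (q - 1)" by (rule trunc_card_min) simp
    show ?thesis unfolding im by (simp only: m t)
  qed
qed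

lemma game_equiv_extend_new:
  assumes g: "game_equiv U q W D1 B1 e1 D2 B2 e2" and x: "x \<notin> W" and q: "1 \<le> q"
    and a: "a \<in> D1" "a \<notin> e1 ` W"
  obtains b where "b \<in> D2" "game_equiv U (q - 1) (insert x W) D1 B1 (e1(x := a)) D2 B2 (e2(x := b))"
proof -
  have eq: "\<forall>u\<in>W. \<forall>v\<in>W. (e1 u = e1 v) = (e2 u = e2 v)"
    and col: "\<forall>u\<in>W. colour U B1 (e1 u) = colour U B2 (e2 u)"
    and t: "\<forall>S. trunc_card q (colour_class U D1 B1 S - e1 ` W) = trunc_card q (colour_class U D2 B2 S - e2 ` W)"
    using g unfolding game_equiv_def by blast+
  have m: "\<And>A. trunc_card (q - 1) A = min (trunc_card q A) (q - 1)" by (rule trunc_card_min) simp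
  have im: "\<And>e c. (e(x := c)) ` (insert x W) = insert c (e ` W)" using x by auto
  define S0 where "S0 = colour U B1 a"
  have a0: "a \<in> colour_class U D1 B1 S0 - e1 ` W" using a S0_def by (simp add: colour_class_def)
  then have "1 \<le> trunc_card q (colour_class U D1 B1 S0 - e1 ` W)"
    using one_le_trunc_card_iff[OF q] by blast
  then have "1 \<le> trunc_card q (colour_class U D2 B2 S0 - e2 ` W)" using t by simp
  then have "colour_class U D2 B2 S0 - e2 ` W \<noteq> {}" using one_le_trunc_card_iff[OF q] by blast
  then obtain b where b0: "b \<in> colour_class U D2 B2 S0 - e2 ` W" by blast
  then have b: "b \<in> D2" "colour U B2 b = S0" "b \<notin> e2 ` W" by (auto simp: colour_class_def)
  have "game_equiv U (q - 1) (insert x W) D1 B1 (e1(x := a)) D2 B2 (e2(x := b))"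
    unfolding game_equiv_def
  proof (intro conjI ballI allI)
    fix u v assume u: "u \<in> insert x W" and v: "v \<in> insert x W"
    show "((e1(x := a)) u = (e1(x := a)) v) = ((e2(x := b)) u = (e2(x := b)) v)"
      using u v eq a(2) b(3) by (cases "u = x"; cases "v = x") auto
  next
    fix u assume "u \<in> insert x W"
    then show "colour U B1 ((e1(x := a)) u) = colour U B2 ((e2(x := b)) u)"
      using col b(2) S0_def by (cases "u = x") auto
  next
    fix S
    show "trunc_card (q - 1) (colour_class U D1 B1 S - (e1(x := a)) ` insert x W) =
      trunc_card (q - 1) (colour_class U D2 B2 S - (e2(x := b)) ` insert x W)"
    proof (cases "S = S0")
      case True
      have "colour_class U D1 B1 S - insert a (e1 ` W) = (colour_class U D1 B1 S - e1 ` W) - {a}"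
        "colour_class U D2 B2 S - insert b (e2 ` W) = (colour_class U D2 B2 S - e2 ` W) - {b}"
        by auto
      then show ?thesis unfolding im
        using trunc_card_remove[of a "colour_class U D1 B1 S - e1 ` W" q]
          trunc_card_remove[of b "colour_class U D2 B2 S - e2 ` W" q] a0 b0 True q t by simp
    next
      case False
      have "a \<notin> colour_class U D1 B1 S" "b \<notin> colour_class U D2 B2 S"
        using False S0_def b(2) by (auto simp: colour_class_def)
      then have "colour_class U D1 B1 S - insert a (e1 ` W) = colour_class U D1 B1 S - e1 ` W"
        "colour_class U D2 B2 S - insert b (e2 ` W) = colour_class U D2 B2 S - e2 ` W" by auto
      then show ?thesis unfolding im by (simp only: m t)
    qed
  qed
  then show ?thesis using b that by blast
qed

lemma game_equiv_extend:
  assumes g: "game_equiv U q W D1 B1 e1 D2 B2 e2" and x: "x \<notin> W" and q: "1 \<le> q"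
    and a: "a \<in> D1" and r2: "range e2 \<subseteq> D2"
  obtains b where "b \<in> D2" "game_equiv U (q - 1) (insert x W) D1 B1 (e1(x := a)) D2 B2 (e2(x := b))"
proof (cases "a \<in> e1 ` W")
  case True
  then obtain y where "y \<in> W" "a = e1 y" by blast
  then show ?thesis using game_equiv_extend_old[OF g x] r2 that by blast
next
  case False
  then show ?thesis using game_equiv_extend_new[OF g x q a] that by blast
qed

lemma fun_upd_range_subset: "range e \<subseteq> D \<Longrightarrow> a \<in> D \<Longrightarrow> range (e(x := a)) \<subseteq> D"
  by auto

lemma sat_game_equiv:
  fixes D1 D2 :: "('s \<times> nat) set"
  assumes "in_lang Z U f" "freevars f \<subseteq> V" "qdepth f \<le> q" "game_equiv U q V D1 B1 e1 D2 B2 e2"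
    "range e1 \<subseteq> D1" "range e2 \<subseteq> D2" "\<forall>p\<in>Z. A1 p = A2 p"
  shows "sat (D1, A1, B1) e1 f = sat (D2, A2, B2) e2 f"
  using assms
proof (induction f arbitrary: V q e1 e2)
  case (Prop p)
  then show ?case by simp
next
  case (Pred P x)
  then have "P \<in> U" "x \<in> V" by auto
  then have "colour U B1 (e1 x) = colour U B2 (e2 x)" using Pred.prems(4) unfolding game_equiv_def by blast
  then have "(P \<in> colour U B1 (e1 x)) = (P \<in> colour U B2 (e2 x))" by simp
  then show ?case using \<open>P \<in> U\<close> by (simp add: colour_def)
next
  case (Eq x y)
  then have "x \<in> V" "y \<in> V" by auto
  then have "(e1 x = e1 y) = (e2 x = e2 y)" using Eq.prems(4) unfolding game_equiv_def by blast
  then show ?case by simp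
next
  case (Neg f)
  have "sat (D1, A1, B1) e1 f = sat (D2, A2, B2) e2 f"
    by (rule Neg.IH) (use Neg.prems in auto)
  then show ?case by simp
next
  case (Conj f g)
  have "sat (D1, A1, B1) e1 f = sat (D2, A2, B2) e2 f"
    by (rule Conj.IH(1)) (use Conj.prems in auto)
  moreover have "sat (D1, A1, B1) e1 g = sat (D2, A2, B2) e2 g"
    by (rule Conj.IH(2)) (use Conj.prems in auto)
  ultimately show ?case by simp
next
  case (Ex x f)
  have q: "1 \<le> q" using Ex.prems(3) by simp
  have dq: "qdepth f \<le> q - 1" using Ex.prems(3) by simp
  have lf: "in_lang Z U f" using Ex.prems(1) by simp
  define W where "W = V - {x}"
  have xW: "x \<notin> W" by (simp add: W_def)
  have fv: "freevars f \<subseteq> insert x W" using Ex.prems(2) by (auto simp: W_def)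
  have gW: "game_equiv U q W D1 B1 e1 D2 B2 e2" unfolding W_def
    by (rule game_equiv_forget) (use Ex.prems in auto)
  show ?case
  proof
    assume "sat (D1, A1, B1) e1 (fm.Ex x f)"
    then obtain a where a: "a \<in> D1" "sat (D1, A1, B1) (e1(x := a)) f" by auto
    obtain b where b: "b \<in> D2" "game_equiv U (q - 1) (insert x W) D1 B1 (e1(x := a)) D2 B2 (e2(x := b))"
      using game_equiv_extend[OF gW xW q a(1) Ex.prems(6)] by metis
    have "sat (D1, A1, B1) (e1(x := a)) f = sat (D2, A2, B2) (e2(x := b)) f"
      by (rule Ex.IH[OF lf fv dq b(2)]) (use Ex.prems a b fun_upd_range_subset in auto)
    then show "sat (D2, A2, B2) e2 (fm.Ex x f)" using a b by auto
  next
    assume "sat (D2, A2, B2) e2 (fm.Ex x f)"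
    then obtain b where b: "b \<in> D2" "sat (D2, A2, B2) (e2(x := b)) f" by auto
    obtain a where a: "a \<in> D1" "game_equiv U (q - 1) (insert x W) D2 B2 (e2(x := b)) D1 B1 (e1(x := a))"
      using game_equiv_extend[OF game_equiv_sym[OF gW] xW q b(1) Ex.prems(5)] by metis
    have "sat (D1, A1, B1) (e1(x := a)) f = sat (D2, A2, B2) (e2(x := b)) f"
      by (rule Ex.IH[OF lf fv dq game_equiv_sym[OF a(2)]]) (use Ex.prems a b fun_upd_range_subset in auto)
    then show "sat (D1, A1, B1) e1 (fm.Ex x f)" using a b by auto
  qed
qed

definition colour_class_of :: "'s set \<Rightarrow> 's struct \<Rightarrow> 's set \<Rightarrow> ('s \<times> nat) set" where
  "colour_class_of U M S = colour_class U (fst M) (snd (snd M)) S"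

lemma colour_class_of_not_subset: "\<not> S \<subseteq> U \<Longrightarrow> colour_class_of U M S = {}"
  by (auto simp: colour_class_of_def colour_class_def colour_def)

lemma game_equiv_empty:
  "\<forall>S. trunc_card q (colour_class U D1 B1 S) = trunc_card q (colour_class U D2 B2 S) \<Longrightarrow>
    game_equiv U q {} D1 B1 e1 D2 B2 e2"
  unfolding game_equiv_def by simp

lemma models_transfer:
  fixes M1 M2 :: "'s struct"
  assumes f: "f \<in> sentences Z U" and d: "qdepth f \<le> q" and s1: "is_struct M1"
    and P: "\<forall>p\<in>Z. fst (snd M1) p = fst (snd M2) p"
    and t: "\<forall>S. trunc_card q (colour_class_of U M1 S) = trunc_card q (colour_class_of U M2 S)"
    and m: "models M1 f"
  shows "models M2 f"
proof -
  obtain D1 A1 B1 where M1: "M1 = (D1, A1, B1)" by (cases M1)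
  obtain D2 A2 B2 where M2: "M2 = (D2, A2, B2)" by (cases M2)
  obtain e1 :: "nat \<Rightarrow> 's \<times> nat" where e1: "range e1 \<subseteq> fst M1" using struct_has_assignment[OF s1] by blast
  have s: "sat M1 e1 f" using m e1 unfolding models_def by blast
  show ?thesis unfolding models_def
  proof (intro allI impI)
    fix e2 :: "nat \<Rightarrow> 's \<times> nat" assume e2: "range e2 \<subseteq> fst M2"
    have g: "game_equiv U q {} D1 B1 e1 D2 B2 e2"
      by (rule game_equiv_empty) (use t in \<open>simp add: colour_class_of_def M1 M2\<close>)
    have "sat (D1, A1, B1) e1 f = sat (D2, A2, B2) e2 f"
      by (rule sat_game_equiv[OF _ _ d g]) (use f e1 e2 P in \<open>auto simp: sentences_def M1 M2\<close>)
    then show "sat M2 e2 f" using s M1 M2 by simp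
  qed
qed

definition subset_index :: "'s set \<Rightarrow> 's set \<Rightarrow> nat" where
  "subset_index U = (SOME f. inj_on f (Pow U))"

lemma inj_on_subset_index:
  fixes U :: "'s set"
  assumes "finite U"
  shows "inj_on (subset_index U) (Pow U)"
proof -
  obtain f :: "'s set \<Rightarrow> nat" where "inj_on f (Pow U)"
    using finite_imp_inj_to_nat_seg[of "Pow U"] assms by auto
  then show ?thesis unfolding subset_index_def by (rule someI[where P="\<lambda>f. inj_on f (Pow U)"])
qed

definition point :: "'s set \<Rightarrow> 's set \<Rightarrow> nat \<Rightarrow> 's \<times> nat" where
  "point U S i = (undefined, prod_encode (subset_index U S, i))"

lemma point_eq_iff:
  assumes "finite U" "S \<subseteq> U" "S' \<subseteq> U"
  shows "point U S i = point U S' i' \<longleftrightarrow> S = S' \<and> i = i'"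
  using inj_on_subset_index[OF assms(1)] assms(2,3) by (auto simp: point_def dest: inj_onD)

definition coloured_struct :: "'s set \<Rightarrow> 's set \<Rightarrow> ('s set \<Rightarrow> nat set) \<Rightarrow> 's struct" where
  "coloured_struct U z K =
    ((\<lambda>(S, i). point U S i) ` {(S, i). S \<subseteq> U \<and> i \<in> K S},
     \<lambda>p. p \<in> z,
     \<lambda>P d. \<exists>S i. S \<subseteq> U \<and> i \<in> K S \<and> d = point U S i \<and> P \<in> S)"

lemma is_struct_coloured_struct: "S \<subseteq> U \<Longrightarrow> K S \<noteq> {} \<Longrightarrow> is_struct (coloured_struct U z K)"
  unfolding is_struct_def coloured_struct_def by auto

lemma props_coloured_struct: "fst (snd (coloured_struct U z K)) = (\<lambda>p. p \<in> z)"
  by (simp add: coloured_struct_def)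

lemma colour_point:
  assumes "finite U" "S \<subseteq> U" "i \<in> K S"
  shows "colour U (snd (snd (coloured_struct U z K))) (point U S i) = S"
proof -
  have "(\<exists>S' i'. S' \<subseteq> U \<and> i' \<in> K S' \<and> point U S i = point U S' i' \<and> P \<in> S') = (P \<in> S)"
    if "P \<in> U" for P
    using point_eq_iff[OF assms(1)] assms(2,3) by blast
  then show ?thesis using assms(2) by (auto simp: colour_def coloured_struct_def)
qed

lemma colour_class_of_coloured_struct:
  assumes "finite U" "S \<subseteq> U"
  shows "colour_class_of U (coloured_struct U z K) S = point U S ` K S"
proof
  show "colour_class_of U (coloured_struct U z K) S \<subseteq> point U S ` K S"
  proof
    fix d assume "d \<in> colour_class_of U (coloured_struct U z K) S"
    then have d: "d \<in> fst (coloured_struct U z K)" "colour U (snd (snd (coloured_struct U z K))) d = S"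
      by (auto simp: colour_class_of_def colour_class_def)
    then obtain S' i where S': "S' \<subseteq> U" "i \<in> K S'" "d = point U S' i" by (auto simp: coloured_struct_def)
    then have "S' = S" using colour_point[of U S' i K z, OF assms(1) S'(1,2)] d(2) by simp
    then show "d \<in> point U S ` K S" using S' by auto
  qed
  show "point U S ` K S \<subseteq> colour_class_of U (coloured_struct U z K) S"
    using assms colour_point[of U S _ K z, OF assms]
    by (auto simp: colour_class_of_def colour_class_def coloured_struct_def)
qed

lemma inj_on_point: "finite U \<Longrightarrow> S \<subseteq> U \<Longrightarrow> inj_on (point U S) A"
  by (auto intro: inj_onI simp: point_eq_iff)

lemma trunc_card_colour_class_of_coloured_struct:
  "finite U \<Longrightarrow> S \<subseteq> U \<Longrightarrow>
    trunc_card q (colour_class_of U (coloured_struct U z K) S) = trunc_card q (K S)"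
  by (simp add: colour_class_of_coloured_struct trunc_card_image inj_on_point)

lemma card_colour_class_of_coloured_struct:
  assumes "finite U" "S \<subseteq> U"
  shows "finite (colour_class_of U (coloured_struct U z K) S) \<longleftrightarrow> finite (K S)"
    and "card (colour_class_of U (coloured_struct U z K) S) = card (K S)"
  using assms by (simp_all add: colour_class_of_coloured_struct finite_image_iff card_image inj_on_point)

definition fm_true :: "'s fm" where
  "fm_true = Ex 0 (Eq 0 0)"

fun has_colour :: "'s list \<Rightarrow> 's set \<Rightarrow> nat \<Rightarrow> 's fm" where
  "has_colour [] S x = Eq x x"
| "has_colour (P # us) S x = Conj (if P \<in> S then Pred P x else Neg (Pred P x)) (has_colour us S x)"

fun distinct_from :: "nat \<Rightarrow> nat \<Rightarrow> 's fm" where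
  "distinct_from 0 k = Eq k k"
| "distinct_from (Suc i) k = Conj (Neg (Eq i k)) (distinct_from i k)"

fun at_least_from :: "'s list \<Rightarrow> 's set \<Rightarrow> nat \<Rightarrow> nat \<Rightarrow> 's fm" where
  "at_least_from us S k 0 = fm_true"
| "at_least_from us S k (Suc n) =
    Ex k (Conj (has_colour us S k) (Conj (distinct_from k k) (at_least_from us S (Suc k) n)))"

definition at_least :: "'s list \<Rightarrow> 's set \<Rightarrow> nat \<Rightarrow> 's fm" where
  "at_least us S n = at_least_from us S 0 n"

definition exactly :: "'s list \<Rightarrow> 's set \<Rightarrow> nat \<Rightarrow> 's fm" where
  "exactly us S c = Conj (at_least us S c) (Neg (at_least us S (Suc c)))"

fun prop_diagram :: "'s list \<Rightarrow> 's set \<Rightarrow> 's fm" where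
  "prop_diagram [] z = fm_true"
| "prop_diagram (p # zs) z = Conj (if p \<in> z then Prop p else Neg (Prop p)) (prop_diagram zs z)"

lemma sat_fm_true: "D \<noteq> {} \<Longrightarrow> sat (D, A, B) e fm_true"
  by (auto simp: fm_true_def)

lemma freevars_fm_true: "freevars fm_true = {}" by (simp add: fm_true_def)
lemma in_lang_fm_true: "in_lang Z U fm_true" by (simp add: fm_true_def)

lemma sat_has_colour: "sat (D, A, B) e (has_colour us S x) \<longleftrightarrow> (\<forall>P\<in>set us. B P (e x) = (P \<in> S))"
  by (induction us) auto

lemma sat_has_colour_iff:
  assumes "set us = U" "S \<subseteq> U"
  shows "sat (D, A, B) e (has_colour us S x) \<longleftrightarrow> colour U B (e x) = S"
  unfolding sat_has_colour colour_def using assms by auto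

lemma freevars_has_colour: "freevars (has_colour us S x) \<subseteq> {x}"
  by (induction us) auto

lemma in_lang_has_colour: "set us \<subseteq> U \<Longrightarrow> in_lang Z U (has_colour us S x)"
  by (induction us) auto

lemma sat_distinct_from: "sat (D, A, B) e (distinct_from i k) \<longleftrightarrow> (\<forall>j<i. e j \<noteq> e k)"
  by (induction i) (auto simp: less_Suc_eq)

lemma freevars_distinct_from: "freevars (distinct_from i k) \<subseteq> insert k {..<i}"
  by (induction i) auto

lemma in_lang_distinct_from: "in_lang Z U (distinct_from i k)"
  by (induction i) auto

lemma freevars_at_least_from: "freevars (at_least_from us S k n) \<subseteq> {..<k}"
proof (induction n arbitrary: k)
  case 0 then show ?case by (simp add: freevars_fm_true)
next
  case (Suc n)
  have "freevars (has_colour us S k) \<subseteq> {..<Suc k}" using freevars_has_colour[of us S k] by auto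
  moreover have "freevars (distinct_from k k :: 's fm) \<subseteq> {..<Suc k}" using freevars_distinct_from[of k k] by auto
  moreover have "freevars (at_least_from us S (Suc k) n) \<subseteq> {..<Suc k}" by (rule Suc.IH)
  ultimately show ?case by auto
qed

lemma in_lang_at_least_from: "set us \<subseteq> U \<Longrightarrow> in_lang Z U (at_least_from us S k n)"
  by (induction n arbitrary: k) (auto simp: in_lang_fm_true in_lang_has_colour in_lang_distinct_from)

lemma sat_at_least_from:
  assumes "set us = U" "S \<subseteq> U" "D \<noteq> {}"
  shows "sat (D, A, B) e (at_least_from us S k n) \<longleftrightarrow> trunc_card n (colour_class U D B S - e ` {..<k}) = n"
  using assms(3)
proof (induction n arbitrary: k e)
  case 0 then show ?case by (simp add: sat_fm_true trunc_card_def)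
next
  case (Suc n)
  let ?E = "e ` {..<k}"
  have im: "(e(k := a)) ` {..<Suc k} = insert a ?E" for a
  proof -
    have "{..<Suc k} = insert k {..<k}" by auto
    then show ?thesis by auto
  qed
  have "sat (D, A, B) e (at_least_from us S k (Suc n)) \<longleftrightarrow>
     (\<exists>a\<in>D. colour U B a = S \<and> (\<forall>j<k. e j \<noteq> a) \<and> trunc_card n (colour_class U D B S - insert a ?E) = n)"
  proof -
    have dk: "sat (D, A, B) (e(k := a)) (distinct_from k k) \<longleftrightarrow> (\<forall>j<k. e j \<noteq> a)" for a
      unfolding sat_distinct_from by auto
    show ?thesis using Suc.IH[OF Suc.prems] sat_has_colour_iff[OF assms(1,2)] dk im by simp
  qed
  also have "\<dots> \<longleftrightarrow> (\<exists>a\<in>colour_class U D B S - ?E. trunc_card n ((colour_class U D B S - ?E) - {a}) = n)"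
  proof -
    have r: "\<And>a. colour_class U D B S - insert a ?E = (colour_class U D B S - ?E) - {a}" by auto
    have m: "a \<in> colour_class U D B S - ?E \<longleftrightarrow> a \<in> D \<and> colour U B a = S \<and> (\<forall>j<k. e j \<noteq> a)" for a
      by (auto simp: colour_class_def)
    show ?thesis
    proof
      assume "\<exists>a\<in>D. colour U B a = S \<and> (\<forall>j<k. e j \<noteq> a) \<and> trunc_card n (colour_class U D B S - insert a ?E) = n"
      then obtain a where "a \<in> D" "colour U B a = S" "\<forall>j<k. e j \<noteq> a" "trunc_card n (colour_class U D B S - insert a ?E) = n"
        by blast
      then show "\<exists>a\<in>colour_class U D B S - ?E. trunc_card n ((colour_class U D B S - ?E) - {a}) = n"
        using m[of a] r[of a] by metis
    next
      assume "\<exists>a\<in>colour_class U D B S - ?E. trunc_card n ((colour_class U D B S - ?E) - {a}) = n"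
      then obtain a where "a \<in> colour_class U D B S - ?E" "trunc_card n ((colour_class U D B S - ?E) - {a}) = n" by blast
      then show "\<exists>a\<in>D. colour U B a = S \<and> (\<forall>j<k. e j \<noteq> a) \<and> trunc_card n (colour_class U D B S - insert a ?E) = n"
        using m[of a] r[of a] by metis
    qed
  qed
  also have "\<dots> \<longleftrightarrow> trunc_card (Suc n) (colour_class U D B S - ?E) = Suc n" by (rule trunc_card_Suc_eq[symmetric])
  finally show ?case .
qed

lemma at_least_in_sentences: "set us \<subseteq> U \<Longrightarrow> at_least us S n \<in> sentences Z U"
  using freevars_at_least_from[of us S 0 n] in_lang_at_least_from[of us U Z S 0 n] by (auto simp: sentences_def at_least_def)

lemma exactly_in_sentences: "set us \<subseteq> U \<Longrightarrow> exactly us S n \<in> sentences Z U"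
  using at_least_in_sentences[of us U S n Z] at_least_in_sentences[of us U S "Suc n" Z] by (auto simp: sentences_def exactly_def)

lemma models_at_least:
  fixes M :: "'s struct"
  assumes "set us = U" "S \<subseteq> U" "is_struct M"
  shows "models M (at_least us S n) \<longleftrightarrow> trunc_card n (colour_class_of U M S) = n"
proof -
  obtain D A B where M: "M = (D, A, B)" by (cases M)
  obtain e :: "nat \<Rightarrow> 's \<times> nat" where e: "range e \<subseteq> fst M" using struct_has_assignment[OF assms(3)] by blast
  have "models M (at_least us S n) = sat M e (at_least us S n)"
    by (rule models_iff_sat[OF _ e]) (use freevars_at_least_from[of us S 0 n] in \<open>simp add: at_least_def\<close>)
  also have "\<dots> = (trunc_card n (colour_class_of U M S) = n)"
    using sat_at_least_from[OF assms(1,2), where D=D and A=A and B=B and e=e and k=0 and n=n] assms(3) M by (simp add: at_least_def colour_class_of_def is_struct_def)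
  finally show ?thesis .
qed

lemma models_exactly:
  fixes M :: "'s struct"
  assumes "set us = U" "S \<subseteq> U" "is_struct M"
  shows "models M (exactly us S c) \<longleftrightarrow> finite (colour_class_of U M S) \<and> card (colour_class_of U M S) = c"
proof -
  have fv: "freevars (at_least us S n) = {}" for n using freevars_at_least_from[of us S 0 n] by (simp add: at_least_def)
  have "models M (exactly us S c) \<longleftrightarrow> trunc_card c (colour_class_of U M S) = c \<and> trunc_card (Suc c) (colour_class_of U M S) \<noteq> Suc c"
    unfolding exactly_def using models_Conj[OF assms(3)] models_Neg[OF assms(3)] fv
      models_at_least[OF assms] by simp
  also have "\<dots> \<longleftrightarrow> finite (colour_class_of U M S) \<and> card (colour_class_of U M S) = c"
    by (auto simp: trunc_card_def min_def)
  finally show ?thesis .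
qed

lemma sat_prop_diagram: "D \<noteq> {} \<Longrightarrow> sat (D, A, B) e (prop_diagram zs z) \<longleftrightarrow> (\<forall>p\<in>set zs. A p = (p \<in> z))"
  by (induction zs) (auto simp: sat_fm_true)

lemma prop_diagram_in_sentences: "set zs \<subseteq> Z \<Longrightarrow> prop_diagram zs z \<in> sentences Z U"
  by (induction zs) (auto simp: sentences_def freevars_fm_true in_lang_fm_true)

lemma models_prop_diagram:
  fixes M :: "'s struct"
  assumes "set zs = Z" "is_struct M"
  shows "models M (prop_diagram zs z) \<longleftrightarrow> (\<forall>p\<in>Z. fst (snd M) p = (p \<in> z))"
proof -
  obtain D A B where M: "M = (D, A, B)" by (cases M)
  obtain e :: "nat \<Rightarrow> 's \<times> nat" where e: "range e \<subseteq> fst M" using struct_has_assignment[OF assms(2)] by blast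
  have "models M (prop_diagram zs z) = sat M e (prop_diagram zs z)"
    by (rule models_iff_sat[OF _ e]) (use prop_diagram_in_sentences[of zs Z z "{}"] assms(1) in \<open>simp add: sentences_def\<close>)
  then show ?thesis using sat_prop_diagram[of D A B e zs z] assms M by (simp add: is_struct_def)
qed

lemma exactly_inconsistent:
  assumes "set us = U" "S \<subseteq> U" "c \<noteq> c'"
  shows "inconsistent2 (exactly us S c) (exactly us S c')"
proof (rule inconsistent2I)
  fix M :: "'a struct" assume M: "is_struct M" "models M (exactly us S c)" "models M (exactly us S c')"
  then show False using models_exactly[OF assms(1,2) M(1)] assms(3) by simp
qed

lemma models_exactly_coloured_struct:
  assumes "finite U" "set us = U" "S \<subseteq> U" "K S = {..<c}" "1 \<le> c"
  shows "models (coloured_struct U z K) (exactly us S c)"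
proof -
  have "is_struct (coloured_struct U z K)"
    by (rule is_struct_coloured_struct[OF assms(3)]) (use assms(4,5) in \<open>auto simp: lessThan_empty_iff\<close>)
  then show ?thesis
    using models_exactly[OF assms(2,3)] card_colour_class_of_coloured_struct[OF assms(1,3), of z K] assms(4)
    by simp
qed

section \<open>Lower bound for the rank\<close>

definition finite_variations ::
  "'s set set \<Rightarrow> nat \<Rightarrow> ('s set \<Rightarrow> nat set) \<Rightarrow> ('s set \<Rightarrow> nat set) set" where
  "finite_variations J t K =
    {K'. (\<forall>S. S \<notin> J \<longrightarrow> K' S = K S) \<and> (\<forall>S\<in>J. \<exists>c\<ge>t. K' S = {..<c})}"

lemma finite_variations_update:
  assumes "S0 \<in> J" "t \<le> c" "K' \<in> finite_variations (J - {S0}) t (K(S0 := {..<c}))"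
  shows "K' \<in> finite_variations J t K" and "K' S0 = {..<c}"
proof -
  have K'1: "\<And>S. S \<notin> J - {S0} \<Longrightarrow> K' S = (K(S0 := {..<c})) S"
    and K'2: "\<And>S. S \<in> J - {S0} \<Longrightarrow> \<exists>c\<ge>t. K' S = {..<c}"
    using assms(3) unfolding finite_variations_def by blast+
  show KS0: "K' S0 = {..<c}" using K'1[of S0] by simp
  have "K' S = K S" if "S \<notin> J" for S
    using K'1[of S] that assms(1) by (cases "S = S0") auto
  moreover have "\<exists>c\<ge>t. K' S = {..<c}" if "S \<in> J" for S
    using K'2[of S] that KS0 assms(2) by (cases "S = S0") auto
  ultimately show "K' \<in> finite_variations J t K" unfolding finite_variations_def by blast
qed

lemma inj_theory_of_exactly:
  assumes "finite U" "S0 \<subseteq> U" "1 \<le> t"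
  shows "inj (\<lambda>c. theory_of Z U (coloured_struct U z (K(S0 := {..<t + c}))))"
proof (rule injI)
  fix c c'
  assume eq: "theory_of Z U (coloured_struct U z (K(S0 := {..<t + c}))) =
    theory_of Z U (coloured_struct U z (K(S0 := {..<t + c'})))"
  obtain us where us: "set us = U" using finite_list[OF assms(1)] by blast
  have "exactly us S0 (t + c) \<in> theory_of Z U (coloured_struct U z (K(S0 := {..<t + c})))"
    using exactly_in_sentences[of us U] models_exactly_coloured_struct[OF assms(1) us assms(2)] us assms(3)
    by (simp add: mem_theory_of)
  then have "models (coloured_struct U z (K(S0 := {..<t + c'}))) (exactly us S0 (t + c))"
    unfolding eq by (simp add: mem_theory_of)
  moreover have "is_struct (coloured_struct U z (K(S0 := {..<t + c'})))"
    by (rule is_struct_coloured_struct[OF assms(2)]) (use assms(3) in \<open>simp add: lessThan_empty_iff\<close>)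
  ultimately show "c = c'"
    using models_exactly[OF us assms(2)] card_colour_class_of_coloured_struct[OF assms(1,2)] by simp
qed

text \<open>Each colour whose class size is free contributes one level of rank: the sentences
  \<open>exactly us S0 (t + i)\<close> split the family into pieces in which one colour fewer is free.\<close>
lemma rs_ge_card_free_colours:
  assumes U: "finite U" and t: "1 \<le> t" and "J \<subseteq> Pow U" "1 \<le> card J"
    and "theory_of Z U ` coloured_struct U z ` finite_variations J t K \<subseteq> G"
  shows "rs_ge Z U G (card J)"
proof -
  obtain n where "card J = Suc n" using assms(4) by (metis One_nat_def Suc_le_D)
  then show ?thesis using assms(3,5)
  proof (induction n arbitrary: J K G)
    case 0
    then obtain S0 where J: "J = {S0}" by (metis One_nat_def card_1_singletonE)
    then have S0: "S0 \<subseteq> U" using "0.prems"(2) by blast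
    have "K(S0 := {..<t + c}) \<in> finite_variations J t K" for c
      unfolding J finite_variations_def by auto
    then have "range (\<lambda>c. theory_of Z U (coloured_struct U z (K(S0 := {..<t + c})))) \<subseteq> G"
      using "0.prems"(3) by blast
    then have "infinite G"
      using inj_theory_of_exactly[OF U S0 t] infinite_iff_countable_subset by blast
    then show ?case using "0.prems"(1) by (simp add: rs_ge_Suc_0)
  next
    case (Suc n)
    have "J \<noteq> {}" using Suc.prems(1) by auto
    then obtain S0 where S0J: "S0 \<in> J" by blast
    then have S0: "S0 \<subseteq> U" using Suc.prems(2) by blast
    have cJ': "card (J - {S0}) = Suc n"
      using Suc.prems(1) S0J card.infinite[of J] by (simp add: card_Diff_singleton)
    obtain us where us: "set us = U" using finite_list[OF U] by blast
    define \<phi> where "\<phi> i = exactly us S0 (t + i)" for i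
    have "rs_ge Z U (restr G (\<phi> i)) (Suc n)" for i
    proof -
      have "J - {S0} \<subseteq> Pow U" using Suc.prems(2) by blast
      moreover have "theory_of Z U ` coloured_struct U z ` finite_variations (J - {S0}) t (K(S0 := {..<t + i}))
          \<subseteq> restr G (\<phi> i)"
      proof
        fix T
        assume "T \<in> theory_of Z U ` coloured_struct U z ` finite_variations (J - {S0}) t (K(S0 := {..<t + i}))"
        then obtain K' where T: "T = theory_of Z U (coloured_struct U z K')"
          and K': "K' \<in> finite_variations (J - {S0}) t (K(S0 := {..<t + i}))" by blast
        have "T \<in> G" using finite_variations_update(1)[OF S0J _ K'] T Suc.prems(3) by auto
        moreover have "\<phi> i \<in> T"
          unfolding T mem_theory_of \<phi>_def
          using exactly_in_sentences[of us U] us finite_variations_update(2)[OF S0J _ K']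
            models_exactly_coloured_struct[OF U us S0] t by simp
        ultimately show "T \<in> restr G (\<phi> i)" by (simp add: restr_def)
      qed
      ultimately have "rs_ge Z U (restr G (\<phi> i)) (card (J - {S0}))" by (rule Suc.IH[OF cJ'])
      then show ?thesis unfolding cJ' .
    qed
    moreover have "\<forall>i. \<phi> i \<in> sentences Z U" using exactly_in_sentences[of us U] us by (simp add: \<phi>_def)
    moreover have "\<forall>i j. i \<noteq> j \<longrightarrow> inconsistent2 (\<phi> i) (\<phi> j)"
      using exactly_inconsistent[OF us S0] by (simp add: \<phi>_def)
    ultimately show ?case unfolding Suc.prems(1) rs_ge_Suc_Suc by blast
  qed
qed

section \<open>Upper bound for the rank\<close>

definition large_colours :: "'s set \<Rightarrow> nat \<Rightarrow> 's struct \<Rightarrow> 's set set" where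
  "large_colours U q M = {S \<in> Pow U. trunc_card q (colour_class_of U M S) = q}"

definition profile :: "'s set \<Rightarrow> 's set \<Rightarrow> nat \<Rightarrow> 's struct \<Rightarrow> 's set \<times> ('s set \<times> nat) set" where
  "profile Z U q M = ({p \<in> Z. fst (snd M) p}, {(S, trunc_card q (colour_class_of U M S)) | S. S \<subseteq> U})"

definition canonical_struct :: "'s set \<Rightarrow> 's set \<Rightarrow> nat \<Rightarrow> 's struct \<Rightarrow> 's struct" where
  "canonical_struct Z U q M = coloured_struct U {p \<in> Z. fst (snd M) p}
     (\<lambda>S. if S \<in> large_colours U q M then UNIV else {..< trunc_card q (colour_class_of U M S)})"

lemma finite_large_colours: "finite U \<Longrightarrow> finite (large_colours U q M)"
  unfolding large_colours_def by simp

lemma large_colours_antimono: "q \<le> q' \<Longrightarrow> large_colours U q' M \<subseteq> large_colours U q M"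
  unfolding large_colours_def using trunc_card_eq_bound_mono by blast

lemma card_colour_class_of_not_large:
  assumes "S \<subseteq> U" "S \<notin> large_colours U q M"
  shows "finite (colour_class_of U M S)" "card (colour_class_of U M S) = trunc_card q (colour_class_of U M S)"
proof -
  have "trunc_card q (colour_class_of U M S) < q"
    using assms trunc_card_le[of q "colour_class_of U M S"] by (auto simp: large_colours_def)
  then show "finite (colour_class_of U M S)" "card (colour_class_of U M S) = trunc_card q (colour_class_of U M S)"
    using trunc_card_less_bound by blast+
qed

lemma profile_eq_props: "profile Z U q M1 = profile Z U q M2 \<Longrightarrow> \<forall>p\<in>Z. fst (snd M1) p = fst (snd M2) p"
  unfolding profile_def by (auto simp: set_eq_iff)

lemma profile_eq_trunc_card: 
  assumes "profile Z U q M1 = profile Z U q M2"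
  shows "trunc_card q (colour_class_of U M1 S) = trunc_card q (colour_class_of U M2 S)"
proof (cases "S \<subseteq> U")
  case True
  have "(S, trunc_card q (colour_class_of U M1 S)) \<in> snd (profile Z U q M1)" using True by (auto simp: profile_def)
  then have "(S, trunc_card q (colour_class_of U M1 S)) \<in> snd (profile Z U q M2)" using assms by simp
  then show ?thesis by (auto simp: profile_def)
next
  case False then show ?thesis by (simp add: colour_class_of_not_subset)
qed

lemma profile_eq_large_colours:
  "profile Z U q M1 = profile Z U q M2 \<Longrightarrow> large_colours U q M1 = large_colours U q M2"
  unfolding large_colours_def using profile_eq_trunc_card by fastforce

lemma profile_in: "profile Z U q M \<in> Pow Z \<times> Pow (Pow U \<times> {..q})"
  unfolding profile_def using trunc_card_le by auto

lemma profile_eq_canonical_struct: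
  "profile Z U q M1 = profile Z U q M2 \<Longrightarrow> canonical_struct Z U q M1 = canonical_struct Z U q M2"
proof -
  assume s: "profile Z U q M1 = profile Z U q M2"
  have "{p \<in> Z. fst (snd M1) p} = {p \<in> Z. fst (snd M2) p}" using profile_eq_props[OF s] by auto
  moreover have "(\<lambda>S. if S \<in> large_colours U q M1 then UNIV else {..< trunc_card q (colour_class_of U M1 S)}) =
     (\<lambda>S. if S \<in> large_colours U q M2 then UNIV else {..< trunc_card q (colour_class_of U M2 S)})"
    by (rule ext) (simp add: profile_eq_large_colours[OF s] profile_eq_trunc_card[OF s])
  ultimately show ?thesis unfolding canonical_struct_def by simp
qed

lemma finite_profiles: "finite Z \<Longrightarrow> finite U \<Longrightarrow> finite (Pow Z \<times> Pow (Pow U \<times> {..q::nat}))"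
  by (auto intro: finite_cartesian_product simp: finite_Pow_iff)

lemma is_struct_canonical_struct: "large_colours U q M \<noteq> {} \<Longrightarrow> is_struct (canonical_struct Z U q M)"
  unfolding canonical_struct_def
  by (rule is_struct_coloured_struct[where S="SOME S. S \<in> large_colours U q M"])
    (use some_in_eq[of "large_colours U q M"] in \<open>auto simp: large_colours_def\<close>)

lemma trunc_card_canonical_struct:
  assumes "finite U" "large_colours U q M = large_colours U q' M"
  shows "trunc_card q' (colour_class_of U (canonical_struct Z U q M) S) = trunc_card q' (colour_class_of U M S)"
proof (cases "S \<subseteq> U")
  case True
  have e: "trunc_card q' (colour_class_of U (canonical_struct Z U q M) S) =
      trunc_card q' (if S \<in> large_colours U q M then UNIV else {..< trunc_card q (colour_class_of U M S)})"
    unfolding canonical_struct_def by (rule trunc_card_colour_class_of_coloured_struct[OF assms(1) True])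
  show ?thesis
  proof (cases "S \<in> large_colours U q M")
    case large: True
    then have "S \<in> large_colours U q' M" using assms(2) by simp
    then have "trunc_card q' (colour_class_of U M S) = q'" by (simp add: large_colours_def)
    moreover have "trunc_card q' (UNIV :: nat set) = q'" by (simp add: trunc_card_infinite)
    ultimately show ?thesis using e large by simp
  next
    case False
    note fin = card_colour_class_of_not_large[OF True False]
    have "trunc_card q' (colour_class_of U (canonical_struct Z U q M) S) =
        min (card (colour_class_of U M S)) q'"
      using e False fin(2) by (simp add: trunc_card_lessThan)
    then show ?thesis using fin(1) by (simp add: trunc_card_def)
  qed
qed (simp add: colour_class_of_not_subset)

text \<open>\<open>canonical_struct\<close> makes the large colours infinite; this is invisible to sentences of
  depth \<open>q'\<close> as long as no colour of size between \<open>q\<close> and \<open>q'\<close> exists.\<close>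
lemma models_canonical_struct:
  assumes "finite U" "is_struct M" "large_colours U q M = large_colours U q' M"
    and "f \<in> sentences Z U" "qdepth f \<le> q'" "models M f"
  shows "models (canonical_struct Z U q M) f"
proof (rule models_transfer[OF assms(4,5,2) _ _ assms(6)])
  show "\<forall>p\<in>Z. fst (snd M) p = fst (snd (canonical_struct Z U q M)) p"
    by (simp add: canonical_struct_def props_coloured_struct)
  show "\<forall>S. trunc_card q' (colour_class_of U M S) = trunc_card q' (colour_class_of U (canonical_struct Z U q M) S)"
    using trunc_card_canonical_struct[OF assms(1,3)] by simp
qed

lemma theory_of_eq_if_profile_eq:
  fixes M1 M2 :: "'s struct"
  assumes M1: "is_struct M1" and M2: "is_struct M2" and s: "profile Z U q M1 = profile Z U q M2"
    and b: "large_colours U q M1 = {}"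
  shows "theory_of Z U M1 = theory_of Z U M2"
proof -
  have b2: "large_colours U q M2 = {}" using b profile_eq_large_colours[OF s] by simp
  have tc: "trunc_card q' (colour_class_of U M1 S) = trunc_card q' (colour_class_of U M2 S)" for q' S
  proof (cases "S \<subseteq> U")
    case True
    have c1: "finite (colour_class_of U M1 S)" "card (colour_class_of U M1 S) = trunc_card q (colour_class_of U M1 S)"
      using card_colour_class_of_not_large[OF True] b by blast+
    have c2: "finite (colour_class_of U M2 S)" "card (colour_class_of U M2 S) = trunc_card q (colour_class_of U M2 S)"
      using card_colour_class_of_not_large[OF True] b2 by blast+
    have "card (colour_class_of U M1 S) = card (colour_class_of U M2 S)"
      unfolding c1(2) c2(2) by (rule profile_eq_trunc_card[OF s])
    then show ?thesis using c1(1) c2(1) by (simp add: trunc_card_def)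
  qed (simp add: colour_class_of_not_subset)
  have P: "\<forall>p\<in>Z. fst (snd M1) p = fst (snd M2) p" by (rule profile_eq_props[OF s])
  show ?thesis
  proof
    show "theory_of Z U M1 \<subseteq> theory_of Z U M2"
      using models_transfer[OF _ order.refl M1 P] tc by (auto simp: mem_theory_of)
    have P': "\<forall>p\<in>Z. fst (snd M2) p = fst (snd M1) p" using P by simp
    have tc': "\<forall>S. trunc_card q' (colour_class_of U M2 S) = trunc_card q' (colour_class_of U M1 S)" for q'
      using tc by simp
    show "theory_of Z U M2 \<subseteq> theory_of Z U M1"
      using models_transfer[OF _ order.refl M2 P' tc'] by (auto simp: mem_theory_of)
  qed
qed

lemma finite_theories_without_large_colours:
  assumes "finite Z" "finite U"
  shows "finite (theory_of Z U ` {M. is_struct M \<and> large_colours U q M = {}})"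
proof -
  let ?A = "{M. is_struct M \<and> large_colours U q M = {}}"
  let ?rep = "\<lambda>P. SOME M. M \<in> ?A \<and> profile Z U q M = P"
  have sub: "theory_of Z U ` ?A \<subseteq> (\<lambda>P. theory_of Z U (?rep P)) ` profile Z U q ` ?A"
  proof
    fix T assume "T \<in> theory_of Z U ` ?A"
    then obtain M where M: "M \<in> ?A" "T = theory_of Z U M" by blast
    let ?M' = "?rep (profile Z U q M)"
    have rep: "?M' \<in> ?A \<and> profile Z U q ?M' = profile Z U q M"
      by (rule someI[where x=M]) (use M(1) in simp)
    have "T = theory_of Z U ?M'"
      using theory_of_eq_if_profile_eq[of ?M' M Z U q] rep M by simp
    moreover have "profile Z U q M \<in> profile Z U q ` ?A" using M(1) by (rule imageI)
    ultimately show "T \<in> (\<lambda>P. theory_of Z U (?rep P)) ` profile Z U q ` ?A" by (rule image_eqI)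
  qed
  have "finite (profile Z U q ` ?A)"
    by (rule finite_subset[OF _ finite_profiles[OF assms]]) (use profile_in in blast)
  then show ?thesis by (rule finite_subset[OF sub finite_imageI])
qed

text \<open>The canonical structures have only finitely many profiles, so two of them coincide and
  satisfy two inconsistent sentences.\<close>
lemma no_inconsistent_family_with_stable_large_colours:
  fixes M :: "nat \<Rightarrow> 's struct"
  assumes "finite Z" "finite U"
    and \<phi>: "\<And>i. \<phi> i \<in> sentences Z U" "\<And>i j. i \<noteq> j \<Longrightarrow> inconsistent2 (\<phi> i) (\<phi> j)"
    and M: "\<And>i. is_struct (M i)" "\<And>i. models (M i) (\<phi> i)"
    and stable: "\<And>i. large_colours U q (M i) = large_colours U (max q (qdepth (\<phi> i))) (M i)"
    and nonempty: "\<And>i. large_colours U q (M i) \<noteq> {}"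
  shows False
proof -
  let ?C = "\<lambda>i. canonical_struct Z U q (M i)"
  have C: "models (?C i) (\<phi> i)" for i
    by (rule models_canonical_struct[OF assms(2) M(1) stable \<phi>(1) _ M(2)]) simp
  have "\<not> inj (\<lambda>i. profile Z U q (M i))"
  proof
    assume "inj (\<lambda>i. profile Z U q (M i))"
    moreover have "range (\<lambda>i. profile Z U q (M i)) \<subseteq> Pow Z \<times> Pow (Pow U \<times> {..q})"
      using profile_in by blast
    ultimately have "infinite (Pow Z \<times> Pow (Pow U \<times> {..q}))"
      using infinite_iff_countable_subset by blast
    then show False using finite_profiles[OF assms(1,2)] by blast
  qed
  then obtain i j where ij: "i \<noteq> j" "profile Z U q (M i) = profile Z U q (M j)"
    unfolding inj_def by blast
  have "?C i = ?C j" by (rule profile_eq_canonical_struct[OF ij(2)])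
  then have "models (?C i) (\<phi> j)" using C[of j] by simp
  then show False
    using \<phi>(2)[OF ij(1)] C[of i] is_struct_canonical_struct[OF nonempty] unfolding inconsistent2_def by blast
qed

lemma large_colours_eq_if_card_le:
  assumes "finite U" "q \<le> q'" "card (large_colours U q M) \<le> card (large_colours U q' M)"
  shows "large_colours U q M = large_colours U q' M"
proof -
  have sub: "large_colours U q' M \<subseteq> large_colours U q M" by (rule large_colours_antimono[OF assms(2)])
  with assms(3) card_mono[OF finite_large_colours[OF assms(1)] sub]
  have "card (large_colours U q' M) = card (large_colours U q M)" by simp
  then show ?thesis by (rule card_subset_eq[OF finite_large_colours[OF assms(1)] sub, symmetric])
qed

lemma infinite_imp_large_colour:
  fixes Z U :: "'s set"
  assumes "finite Z" "finite U" "infinite G" "G \<subseteq> all_theories Z U"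
  shows "\<exists>M. is_struct M \<and> theory_of Z U M \<in> G \<and> 1 \<le> card (large_colours U q M)"
proof -
  have "\<not> G \<subseteq> theory_of Z U ` {M. is_struct M \<and> large_colours U q M = {}}"
    using finite_theories_without_large_colours[OF assms(1,2)] assms(3) finite_subset by blast
  then obtain M where "is_struct M" "theory_of Z U M \<in> G" and "large_colours U q M \<noteq> {}"
    using assms(4) unfolding all_theories_eq by blast
  moreover have "0 < card (large_colours U q M)"
    using \<open>large_colours U q M \<noteq> {}\<close> finite_large_colours[OF assms(2)] by (simp add: card_gt_0_iff)
  ultimately show ?thesis by (intro exI[of _ M]) simp
qed

lemma rs_ge_imp_large_colours:
  fixes Z U :: "'s set"
  assumes "finite Z" "finite U"
  shows "1 \<le> j \<Longrightarrow> G \<subseteq> all_theories Z U \<Longrightarrow> rs_ge Z U G j \<Longrightarrow>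
    \<exists>M. is_struct M \<and> theory_of Z U M \<in> G \<and> j \<le> card (large_colours U q M)"
proof (induction j arbitrary: G q)
  case 0
  then show ?case by simp
next
  case (Suc j)
  show ?case
  proof (cases j)
    case 0
    then have "infinite G" using Suc.prems(3) by (simp add: rs_ge_Suc_0)
    then show ?thesis using infinite_imp_large_colour[OF assms _ Suc.prems(2)] 0 by simp
  next
    case (Suc n)
    obtain \<phi> :: "nat \<Rightarrow> 's fm" where \<phi>: "\<And>i. \<phi> i \<in> sentences Z U"
      "\<And>i j. i \<noteq> j \<Longrightarrow> inconsistent2 (\<phi> i) (\<phi> j)" "\<And>i. rs_ge Z U (restr G (\<phi> i)) (Suc n)"
      using Suc.prems(3) unfolding \<open>j = Suc n\<close> rs_ge_Suc_Suc by blast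
    have "\<forall>i. \<exists>M. is_struct M \<and> theory_of Z U M \<in> restr G (\<phi> i) \<and>
        Suc n \<le> card (large_colours U (max q (qdepth (\<phi> i))) M)"
    proof
      fix i
      have "restr G (\<phi> i) \<subseteq> all_theories Z U" using Suc.prems(2) by (auto simp: restr_def)
      then show "\<exists>M. is_struct M \<and> theory_of Z U M \<in> restr G (\<phi> i) \<and>
          Suc n \<le> card (large_colours U (max q (qdepth (\<phi> i))) M)"
        using Suc.IH[of "restr G (\<phi> i)" "max q (qdepth (\<phi> i))"] \<phi>(3) \<open>j = Suc n\<close> by simp
    qed
    then obtain M :: "nat \<Rightarrow> 's struct" where "\<forall>i. is_struct (M i) \<and>
        theory_of Z U (M i) \<in> restr G (\<phi> i) \<and> Suc n \<le> card (large_colours U (max q (qdepth (\<phi> i))) (M i))"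
      by (metis choice)
    then have M: "\<And>i. is_struct (M i)" "\<And>i. theory_of Z U (M i) \<in> restr G (\<phi> i)"
      "\<And>i. Suc n \<le> card (large_colours U (max q (qdepth (\<phi> i))) (M i))"
      by blast+
    show ?thesis
    proof (rule ccontr)
      assume "\<not> ?thesis"
      then have bound: "\<And>M. is_struct M \<Longrightarrow> theory_of Z U M \<in> G \<Longrightarrow> card (large_colours U q M) \<le> Suc n"
        using \<open>j = Suc n\<close> by fastforce
      have stable: "large_colours U q (M i) = large_colours U (max q (qdepth (\<phi> i))) (M i)" for i
      proof (rule large_colours_eq_if_card_le[OF assms(2) max.cobounded1])
        have "theory_of Z U (M i) \<in> G" using M(2)[of i] by (simp add: restr_def)
        then have "card (large_colours U q (M i)) \<le> Suc n" by (rule bound[OF M(1)])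
        then show "card (large_colours U q (M i)) \<le> card (large_colours U (max q (qdepth (\<phi> i))) (M i))"
          using M(3)[of i] by (rule le_trans)
      qed
      have models: "models (M i) (\<phi> i)" for i using M(2)[of i] by (simp add: restr_def mem_theory_of)
      have nonempty: "large_colours U q (M i) \<noteq> {}" for i
        using M(3)[of i] unfolding stable[of i, symmetric] by (intro notI) simp
      show False
        by (rule no_inconsistent_family_with_stable_large_colours[OF assms \<phi>(1,2) M(1) models stable nonempty])
    qed
  qed
qed

section \<open>Finite languages\<close>

lemma not_rs_ge_Suc_card_Pow:
  fixes Z U :: "'s set"
  assumes "finite Z" "finite U" "G \<subseteq> all_theories Z U"
  shows "\<not> rs_ge Z U G (Suc (card (Pow U)))"
proof
  assume "rs_ge Z U G (Suc (card (Pow U)))"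
  then have "\<exists>M. is_struct M \<and> theory_of Z U M \<in> G \<and> Suc (card (Pow U)) \<le> card (large_colours U 0 M)"
    by (intro rs_ge_imp_large_colours[OF assms(1,2) _ assms(3)]) simp
  then obtain M :: "'s struct" where "Suc (card (Pow U)) \<le> card (large_colours U 0 M)" by blast
  moreover have "card (large_colours U 0 M) \<le> card (Pow U)"
    by (rule card_mono) (auto simp: assms(2) large_colours_def)
  ultimately show False by simp
qed

lemma is_struct_coloured_struct_finite_variations:
  assumes "K \<in> finite_variations (Pow U) 1 K0"
  shows "is_struct (coloured_struct U z K)"
proof -
  have "\<exists>c\<ge>1. K {} = {..<c}" using assms unfolding finite_variations_def by blast
  then obtain c where "1 \<le> c" "K {} = {..<c}" by blast
  then show ?thesis by (intro is_struct_coloured_struct[of "{}"]) (auto simp: lessThan_empty_iff)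
qed

lemma rs_ge_card_Pow:
  assumes "finite U" "\<And>K. K \<in> finite_variations (Pow U) 1 K0 \<Longrightarrow> theory_of Z U (coloured_struct U z K) \<in> G"
  shows "rs_ge Z U G (card (Pow U))"
proof (rule rs_ge_card_free_colours[OF assms(1) order.refl order.refl])
  show "1 \<le> card (Pow U)" using assms(1) by (simp add: card_Pow)
  show "theory_of Z U ` coloured_struct U z ` finite_variations (Pow U) 1 K0 \<subseteq> G"
    using assms(2) by blast
qed

lemma rs_eq_card_Pow:
  assumes "finite Z" "finite U" "G \<subseteq> all_theories Z U"
    and "\<And>K. K \<in> finite_variations (Pow U) 1 K0 \<Longrightarrow> theory_of Z U (coloured_struct U z K) \<in> G"
  shows "rs_eq Z U G (card (Pow U))"
  unfolding rs_eq_def using rs_ge_card_Pow[OF assms(2,4)] not_rs_ge_Suc_card_Pow[OF assms(1-3)] by blast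

definition saturated_struct :: "'s set \<Rightarrow> 's set \<Rightarrow> 's struct" where
  "saturated_struct U z = coloured_struct U z (\<lambda>S. if S \<subseteq> U then UNIV else {})"

lemma is_struct_saturated_struct: "is_struct (saturated_struct U z)"
  unfolding saturated_struct_def by (rule is_struct_coloured_struct[of "{}"]) simp_all

lemma canonical_struct_all_large:
  assumes "large_colours U q M = Pow U"
  shows "canonical_struct Z U q M = saturated_struct U {p \<in> Z. fst (snd M) p}"
proof -
  have "(\<lambda>S. if S \<in> large_colours U q M then UNIV else {..< trunc_card q (colour_class_of U M S)}) =
      (\<lambda>S. if S \<subseteq> U then UNIV else {})"
    using assms by (intro ext) (simp add: colour_class_of_not_subset trunc_card_empty)
  then show ?thesis unfolding canonical_struct_def saturated_struct_def by simp
qed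

text \<open>By the upper bound all colours are large in some model of \<open>f\<close>; its canonical structure
  has all colours infinite.\<close>
lemma max_rank_imp_models_saturated_struct:
  fixes Z U :: "'s set"
  assumes "finite Z" "finite U" "f \<in> sentences Z U"
    and "rs_ge Z U (restr (all_theories Z U) f) (card (Pow U))"
  obtains z where "z \<subseteq> Z" "models (saturated_struct U z) f"
proof -
  have "restr (all_theories Z U) f \<subseteq> all_theories Z U" by (auto simp: restr_def)
  moreover have "1 \<le> card (Pow U)" using assms(2) by (simp add: card_Pow)
  ultimately obtain M where M: "is_struct M" "theory_of Z U M \<in> restr (all_theories Z U) f"
    and large: "card (Pow U) \<le> card (large_colours U (qdepth f) M)"
    using rs_ge_imp_large_colours[OF assms(1,2)] assms(4) by blast
  have sub: "large_colours U (qdepth f) M \<subseteq> Pow U" by (auto simp: large_colours_def)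
  have all_large: "large_colours U (qdepth f) M = Pow U"
    using card_subset_eq[OF _ sub] card_mono[OF _ sub] large assms(2) by simp
  have "models M f" using M(2) by (simp add: restr_def mem_theory_of)
  then have "models (canonical_struct Z U (qdepth f) M) f"
    by (rule models_canonical_struct[OF assms(2) M(1) refl assms(3) order.refl])
  then show ?thesis using that[of "{p \<in> Z. fst (snd M) p}"] canonical_struct_all_large[OF all_large] by simp
qed

lemma card_inconsistent_saturated_sentences:
  fixes Z U :: "'s set"
  assumes "finite Z" "\<And>f g. f \<in> \<Phi> \<Longrightarrow> g \<in> \<Phi> \<Longrightarrow> f \<noteq> g \<Longrightarrow> inconsistent2 f g"
    and "\<And>f. f \<in> \<Phi> \<Longrightarrow> \<exists>z\<subseteq>Z. models (saturated_struct U z) f"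
  shows "finite \<Phi>" "card \<Phi> \<le> 2 ^ card Z"
proof -
  define zf where "zf f = (SOME z. z \<subseteq> Z \<and> models (saturated_struct U z) f)" for f
  have zf: "zf f \<subseteq> Z" "models (saturated_struct U (zf f)) f" if "f \<in> \<Phi>" for f
    using someI_ex[OF assms(3)[OF that]] unfolding zf_def by blast+
  have inj: "inj_on zf \<Phi>"
  proof (rule inj_onI, rule ccontr)
    fix f g assume fg: "f \<in> \<Phi>" "g \<in> \<Phi>" "zf f = zf g" "f \<noteq> g"
    then have "models (saturated_struct U (zf f)) f" "models (saturated_struct U (zf f)) g"
      using zf(2) by metis+
    then show False
      using assms(2)[OF fg(1,2,4)] is_struct_saturated_struct unfolding inconsistent2_def by blast
  qed
  have sub: "zf ` \<Phi> \<subseteq> Pow Z" using zf(1) by blast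
  show "finite \<Phi>"
    using finite_imageD[OF finite_subset[OF sub] inj] assms(1) by simp
  show "card \<Phi> \<le> 2 ^ card Z"
    using card_inj_on_le[OF inj sub] assms(1) by (simp add: card_Pow)
qed

lemma prop_diagram_eqD:
  "prop_diagram zs z1 = prop_diagram zs z2 \<Longrightarrow> p \<in> set zs \<Longrightarrow> p \<in> z1 \<longleftrightarrow> p \<in> z2"
  by (induction zs) (auto split: if_splits)

lemma theory_of_coloured_struct_in_restr_prop_diagram:
  assumes "set zs = Z" "z \<subseteq> Z" "K \<in> finite_variations (Pow U) 1 K0"
  shows "theory_of Z U (coloured_struct U z K) \<in> restr (all_theories Z U) (prop_diagram zs z)"
proof -
  have M: "is_struct (coloured_struct U z K)" by (rule is_struct_coloured_struct_finite_variations[OF assms(3)])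
  then have "models (coloured_struct U z K) (prop_diagram zs z)"
    using models_prop_diagram[OF assms(1) M] by (simp add: props_coloured_struct)
  then show ?thesis using M prop_diagram_in_sentences[of zs Z z U] assms(1)
    by (simp add: restr_def mem_theory_of theory_of_in_all_theories)
qed

lemma inconsistent2_prop_diagram:
  assumes "set zs = Z" "z1 \<subseteq> Z" "z2 \<subseteq> Z" "z1 \<noteq> z2"
  shows "inconsistent2 (prop_diagram zs z1) (prop_diagram zs z2)"
proof (rule inconsistent2I)
  fix M :: "'a struct"
  assume "is_struct M" "models M (prop_diagram zs z1)" "models M (prop_diagram zs z2)"
  then have "\<forall>p\<in>Z. (p \<in> z1) = (p \<in> z2)" using models_prop_diagram[OF assms(1)] by simp
  then show False using assms(2-4) by blast
qed

lemma card_inconsistent_max_rank_sentences: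
  fixes Z U :: "'s set"
  assumes "finite Z" "finite U" "\<Phi> \<subseteq> sentences Z U"
    and "\<forall>f\<in>\<Phi>. \<forall>g\<in>\<Phi>. f \<noteq> g \<longrightarrow> inconsistent2 f g"
    and "\<forall>f\<in>\<Phi>. rs_eq Z U (restr (all_theories Z U) f) (card (Pow U))"
  shows "finite \<Phi> \<and> card \<Phi> \<le> 2 ^ card Z"
proof -
  have "\<exists>z\<subseteq>Z. models (saturated_struct U z) f" if f: "f \<in> \<Phi>" for f
  proof -
    have "rs_ge Z U (restr (all_theories Z U) f) (card (Pow U))"
      using assms(5) f unfolding rs_eq_def by blast
    then obtain z where "z \<subseteq> Z" "models (saturated_struct U z) f"
      using max_rank_imp_models_saturated_struct[OF assms(1,2)] assms(3) f by blast
    then show ?thesis by blast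
  qed
  moreover have "\<And>f g. f \<in> \<Phi> \<Longrightarrow> g \<in> \<Phi> \<Longrightarrow> f \<noteq> g \<Longrightarrow> inconsistent2 f g"
    using assms(4) by blast
  ultimately show ?thesis using card_inconsistent_saturated_sentences[OF assms(1)] by blast
qed

lemma rs_ds_finite_language:
  fixes Z U :: "'s set"
  assumes "finite Z" "finite U"
  shows "rs_eq Z U (all_theories Z U) (2 ^ card U) \<and> ds_eq Z U (all_theories Z U) (2 ^ card Z)"
proof -
  obtain zs where zs: "set zs = Z" using finite_list[OF assms(1)] by blast
  define F where "F = all_theories Z U"
  define N where "N = card (Pow U)"
  have rs_F: "rs_eq Z U F N" unfolding N_def F_def
    by (rule rs_eq_card_Pow[OF assms order.refl])
      (rule theory_of_in_all_theories[OF is_struct_coloured_struct_finite_variations])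
  let ?\<Phi> = "prop_diagram zs ` Pow Z"
  have inj: "inj_on (prop_diagram zs) (Pow Z)"
    using prop_diagram_eqD[of zs] zs by (intro inj_onI) blast
  have "rs_eq Z U (restr F f) N" if "f \<in> ?\<Phi>" for f
  proof -
    obtain z where z: "z \<subseteq> Z" "f = prop_diagram zs z" using \<open>f \<in> ?\<Phi>\<close> by blast
    have "restr F f \<subseteq> all_theories Z U" by (auto simp: restr_def F_def)
    then show ?thesis unfolding N_def z(2) F_def
      using theory_of_coloured_struct_in_restr_prop_diagram[OF zs z(1)] by (rule rs_eq_card_Pow[OF assms])
  qed
  moreover have "card ?\<Phi> = 2 ^ card Z" using card_image[OF inj] assms(1) by (simp add: card_Pow)
  moreover have "?\<Phi> \<subseteq> sentences Z U" using prop_diagram_in_sentences[of zs Z] zs by blast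
  moreover have "\<forall>f\<in>?\<Phi>. \<forall>g\<in>?\<Phi>. f \<noteq> g \<longrightarrow> inconsistent2 f g"
    using inconsistent2_prop_diagram[OF zs] by blast
  ultimately have "ds_eq Z U F (2 ^ card Z)"
    unfolding ds_eq_def F_def N_def
    using rs_F card_inconsistent_max_rank_sentences[OF assms] finite_imageI[of "Pow Z" "prop_diagram zs"]
    unfolding F_def N_def by (intro exI[of _ "card (Pow U)"] conjI exI[of _ ?\<Phi>] allI impI) auto
  then show ?thesis using rs_F assms(2) unfolding F_def N_def by (simp add: card_Pow)
qed

section \<open>Infinite languages\<close>

definition atom_sentence :: "'s set \<Rightarrow> (nat \<Rightarrow> 's) \<Rightarrow> nat \<Rightarrow> 's fm" where
  "atom_sentence Z sy i = (if sy i \<in> Z then Prop (sy i) else Ex 0 (Pred (sy i) 0))"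

definition atom_value :: "'s set \<Rightarrow> (nat \<Rightarrow> 's) \<Rightarrow> 's struct \<Rightarrow> nat \<Rightarrow> bool" where
  "atom_value Z sy M i =
    (if sy i \<in> Z then fst (snd M) (sy i) else (\<exists>d\<in>fst M. snd (snd M) (sy i) d))"

fun atom_pattern :: "'s set \<Rightarrow> (nat \<Rightarrow> 's) \<Rightarrow> nat \<Rightarrow> bool list \<Rightarrow> 's fm" where
  "atom_pattern Z sy k [] = fm_true"
| "atom_pattern Z sy k (b # l) =
    Conj (if b then atom_sentence Z sy k else Neg (atom_sentence Z sy k)) (atom_pattern Z sy (Suc k) l)"

lemma sat_atom_sentence: "sat (D, A, B) e (atom_sentence Z sy i) = atom_value Z sy (D, A, B) i"
  by (simp add: atom_sentence_def atom_value_def)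

lemma sat_atom_pattern:
  "D \<noteq> {} \<Longrightarrow> sat (D, A, B) e (atom_pattern Z sy k l) \<longleftrightarrow>
    (\<forall>i<length l. atom_value Z sy (D, A, B) (k + i) = l ! i)"
proof (induction l arbitrary: k)
  case Nil
  then show ?case by (simp add: sat_fm_true)
next
  case (Cons b l)
  have "(\<forall>i<length (b # l). atom_value Z sy (D, A, B) (k + i) = (b # l) ! i) \<longleftrightarrow>
      atom_value Z sy (D, A, B) k = b \<and> (\<forall>i<length l. atom_value Z sy (D, A, B) (Suc k + i) = l ! i)"
    by (auto simp: less_Suc_eq_0_disj)
  moreover have "sat (D, A, B) e (atom_pattern Z sy k (b # l)) \<longleftrightarrow>
      atom_value Z sy (D, A, B) k = b \<and> (\<forall>i<length l. atom_value Z sy (D, A, B) (Suc k + i) = l ! i)"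
    using Cons.IH[OF Cons.prems] by (cases b) (simp_all add: sat_atom_sentence)
  ultimately show ?case by simp
qed

lemma atom_sentence_in_sentences: "sy i \<in> Z \<union> U \<Longrightarrow> atom_sentence Z sy i \<in> sentences Z U"
  by (auto simp: atom_sentence_def sentences_def)

lemma atom_pattern_in_sentences:
  assumes "range sy \<subseteq> Z \<union> U"
  shows "atom_pattern Z sy k l \<in> sentences Z U"
proof -
  have "in_lang Z U (atom_sentence Z sy i) \<and> freevars (atom_sentence Z sy i) = {}" for i
    using atom_sentence_in_sentences[of sy i Z U] assms by (auto simp: sentences_def)
  then show ?thesis
    by (induction l arbitrary: k) (auto simp: sentences_def freevars_fm_true in_lang_fm_true)
qed

lemma models_atom_pattern:
  fixes M :: "'s struct"
  assumes "is_struct M" "range sy \<subseteq> Z \<union> U"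
  shows "models M (atom_pattern Z sy 0 l) \<longleftrightarrow> (\<forall>i<length l. atom_value Z sy M i = l ! i)"
proof -
  obtain D A B where M: "M = (D, A, B)" by (cases M)
  obtain e :: "nat \<Rightarrow> 's \<times> nat" where e: "range e \<subseteq> fst M"
    using struct_has_assignment[OF assms(1)] by blast
  have "models M (atom_pattern Z sy 0 l) = sat M e (atom_pattern Z sy 0 l)"
    by (rule models_iff_sat[OF _ e])
      (use atom_pattern_in_sentences[OF assms(2), of 0 l] in \<open>simp add: sentences_def\<close>)
  then show ?thesis using sat_atom_pattern[of D A B e Z sy 0 l] assms(1) M by (simp add: is_struct_def)
qed

lemma theory_of_eq_imp_atom_value_eq:
  fixes M M' :: "'s struct"
  assumes "is_struct M" "is_struct M'" "sy i \<in> Z \<union> U" "theory_of Z U M = theory_of Z U M'"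
  shows "atom_value Z sy M i = atom_value Z sy M' i"
proof -
  have models: "models N (atom_sentence Z sy i) \<longleftrightarrow> atom_value Z sy N i" if N: "is_struct N" for N :: "'s struct"
  proof -
    obtain e :: "nat \<Rightarrow> 's \<times> nat" where e: "range e \<subseteq> fst N"
      using struct_has_assignment[OF N] by blast
    have "models N (atom_sentence Z sy i) = sat N e (atom_sentence Z sy i)"
      by (rule models_iff_sat[OF _ e]) (simp add: atom_sentence_def)
    then show ?thesis by (cases N) (simp add: sat_atom_sentence)
  qed
  have s: "atom_sentence Z sy i \<in> sentences Z U" using atom_sentence_in_sentences[of sy i Z U] assms(3) by blast
  show ?thesis
    using assms(4) models[OF assms(1)] models[OF assms(2)] s by (metis mem_theory_of)
qed

definition pattern_struct :: "'s set \<Rightarrow> (nat \<Rightarrow> 's) \<Rightarrow> bool list \<Rightarrow> 's struct" where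
  "pattern_struct Z sy l =
    ({(undefined, 0)}, \<lambda>p. \<exists>i<length l. sy i = p \<and> l ! i, \<lambda>P d. \<exists>i<length l. sy i = P \<and> sy i \<notin> Z \<and> l ! i)"

lemma is_struct_pattern_struct: "is_struct (pattern_struct Z sy l)"
  by (simp add: pattern_struct_def is_struct_def)

lemma atom_value_pattern_struct:
  assumes "inj sy" "i < length l"
  shows "atom_value Z sy (pattern_struct Z sy l) i = l ! i"
proof -
  have "\<And>i'. (sy i' = sy i) = (i' = i)" using assms(1) by (auto dest: injD)
  then show ?thesis using assms(2) by (auto simp: atom_value_def pattern_struct_def)
qed

definition pattern_extend :: "bool list \<Rightarrow> nat \<Rightarrow> bool list" where
  "pattern_extend l n = l @ replicate n True @ [False]"

lemma length_pattern_extend: "length (pattern_extend l n) = length l + n + 1"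
  by (simp add: pattern_extend_def)

lemma nth_pattern_extend_prefix: "i < length l \<Longrightarrow> pattern_extend l n ! i = l ! i"
  by (simp add: pattern_extend_def nth_append)

lemma nth_pattern_extend: "m \<le> n \<Longrightarrow> pattern_extend l n ! (length l + m) = (m < n)"
  by (auto simp: pattern_extend_def nth_append nth_Cons')

lemma pattern_extend_conflict:
  assumes "\<forall>i<length (pattern_extend l n). v i = pattern_extend l n ! i"
    and "\<forall>i<length (pattern_extend l n'). v' i = pattern_extend l n' ! i" and "n < n'"
  shows "v (length l + n) \<noteq> v' (length l + n)"
  using assms nth_pattern_extend[of n n l] nth_pattern_extend[of n n' l] length_pattern_extend[of l]
  by simp

definition pattern_theories :: "'s set \<Rightarrow> 's set \<Rightarrow> (nat \<Rightarrow> 's) \<Rightarrow> bool list \<Rightarrow> 's fm set set" where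
  "pattern_theories Z U sy l =
    {theory_of Z U M | M. is_struct M \<and> (\<forall>i<length l. atom_value Z sy M i = l ! i)}"

lemma pattern_theories_pattern_extend_subset:
  "pattern_theories Z U sy (pattern_extend l n) \<subseteq> pattern_theories Z U sy l"
proof
  fix T assume "T \<in> pattern_theories Z U sy (pattern_extend l n)"
  then obtain M where M: "T = theory_of Z U M" "is_struct M"
    "\<forall>i<length (pattern_extend l n). atom_value Z sy M i = pattern_extend l n ! i"
    unfolding pattern_theories_def by blast
  then have "\<forall>i<length l. atom_value Z sy M i = l ! i"
    using length_pattern_extend[of l n] nth_pattern_extend_prefix[of _ l n] by simp
  then show "T \<in> pattern_theories Z U sy l" unfolding pattern_theories_def using M(1,2) by blast
qed

lemma theory_of_pattern_struct_in_pattern_theories: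
  assumes "inj sy"
  shows "theory_of Z U (pattern_struct Z sy l) \<in> pattern_theories Z U sy l"
proof -
  have "\<forall>i<length l. atom_value Z sy (pattern_struct Z sy l) i = l ! i"
    using atom_value_pattern_struct[OF assms] by blast
  then show ?thesis unfolding pattern_theories_def using is_struct_pattern_struct by blast
qed

lemma infinite_pattern_theories:
  assumes "inj sy" "range sy \<subseteq> Z \<union> U"
  shows "infinite (pattern_theories Z U sy l)"
proof -
  let ?T = "\<lambda>n. theory_of Z U (pattern_struct Z sy (pattern_extend l n))"
  have "inj ?T"
  proof (rule injI, rule ccontr)
    fix n n' assume eq: "?T n = ?T n'" and "n \<noteq> n'"
    have agree: "\<forall>i<length (pattern_extend l m). atom_value Z sy (pattern_struct Z sy (pattern_extend l m)) i
        = pattern_extend l m ! i" for m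
      using atom_value_pattern_struct[OF assms(1)] by blast
    have same: "atom_value Z sy (pattern_struct Z sy (pattern_extend l n)) i =
        atom_value Z sy (pattern_struct Z sy (pattern_extend l n')) i" for i
      using theory_of_eq_imp_atom_value_eq[OF is_struct_pattern_struct is_struct_pattern_struct _ eq] assms(2)
      by blast
    from \<open>n \<noteq> n'\<close> consider "n < n'" | "n' < n" by linarith
    then show False
      by cases (use pattern_extend_conflict[OF agree agree] same in metis)+
  qed
  moreover have "range ?T \<subseteq> pattern_theories Z U sy l"
    using theory_of_pattern_struct_in_pattern_theories[OF assms(1)] pattern_theories_pattern_extend_subset
    by blast
  ultimately show ?thesis using infinite_iff_countable_subset by blast
qed

lemma inconsistent2_atom_pattern_extend:
  fixes sy :: "nat \<Rightarrow> 's"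
  assumes "range sy \<subseteq> Z \<union> U" "n < n'"
  shows "inconsistent2 (atom_pattern Z sy 0 (pattern_extend l n)) (atom_pattern Z sy 0 (pattern_extend l n'))"
proof (rule inconsistent2I)
  fix M :: "'s struct"
  assume M: "is_struct M" "models M (atom_pattern Z sy 0 (pattern_extend l n))"
    "models M (atom_pattern Z sy 0 (pattern_extend l n'))"
  show False
    using pattern_extend_conflict[of l n "atom_value Z sy M" n' "atom_value Z sy M"] assms(2)
      M(2,3) unfolding models_atom_pattern[OF M(1) assms(1)] by blast
qed

lemma pattern_theories_pattern_extend_subset_restr:
  assumes "range sy \<subseteq> Z \<union> U" "pattern_theories Z U sy l \<subseteq> G"
  shows "pattern_theories Z U sy (pattern_extend l n) \<subseteq> restr G (atom_pattern Z sy 0 (pattern_extend l n))"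
proof
  fix T assume T: "T \<in> pattern_theories Z U sy (pattern_extend l n)"
  then have "T \<in> G" using pattern_theories_pattern_extend_subset assms(2) by blast
  moreover obtain M where M: "T = theory_of Z U M" "is_struct M"
    "\<forall>i<length (pattern_extend l n). atom_value Z sy M i = pattern_extend l n ! i"
    using T unfolding pattern_theories_def by blast
  then have "atom_pattern Z sy 0 (pattern_extend l n) \<in> T"
    using atom_pattern_in_sentences[OF assms(1)] models_atom_pattern[OF M(2) assms(1)] by (simp add: mem_theory_of)
  ultimately show "T \<in> restr G (atom_pattern Z sy 0 (pattern_extend l n))" by (simp add: restr_def)
qed

text \<open>At successor ordinals the family is split by the patterns \<open>pattern_extend l n\<close>, which
  again contain all theories agreeing with a longer pattern.\<close>
lemma rs_ge_pattern_theories: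
  fixes a :: "'o::wellorder"
  assumes "inj sy" "range sy \<subseteq> Z \<union> U"
  shows "pattern_theories Z U sy l \<subseteq> G \<Longrightarrow> rs_ge Z U G a"
proof (induction a arbitrary: l G rule: less_induct)
  case (less a)
  let ?\<phi> = "\<lambda>n. atom_pattern Z sy 0 (pattern_extend l n)"
  have inf: "infinite G"
    using infinite_pattern_theories[OF assms, of l] less.prems finite_subset by blast
  consider (least) "is_least a" | (one) b where "is_least b" "is_succ_of a b"
    | (succ) b where "\<not> is_least b" "is_succ_of a b" | (limit) "\<not> is_least a" "\<not> (\<exists>b. is_succ_of a b)"
    by blast
  then show ?case
  proof cases
    case least
    then show ?thesis using inf rs_ge_least[OF least] by auto
  next
    case one
    then show ?thesis using inf rs_ge_succ_least[OF one, of Z U G] by simp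
  next
    case succ
    have "b < a" using succ(2) by (simp add: is_succ_of_def)
    have "rs_ge Z U (restr G (?\<phi> n)) b" for n
      by (rule less.IH[OF \<open>b < a\<close> pattern_theories_pattern_extend_subset_restr[OF assms(2) less.prems]])
    moreover have "?\<phi> n \<in> sentences Z U" for n by (rule atom_pattern_in_sentences[OF assms(2)])
    moreover have "inconsistent2 (?\<phi> i) (?\<phi> j)" if "i \<noteq> j" for i j
    proof (cases "i < j")
      case True
      then show ?thesis by (rule inconsistent2_atom_pattern_extend[OF assms(2)])
    next
      case False
      then have "j < i" using that by simp
      then have "inconsistent2 (?\<phi> j) (?\<phi> i)" by (rule inconsistent2_atom_pattern_extend[OF assms(2)])
      then show ?thesis unfolding inconsistent2_def by blast
    qed
    ultimately show ?thesis unfolding rs_ge_succ[OF succ] by (intro exI[of _ ?\<phi>]) blast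
  next
    case limit
    show ?thesis unfolding rs_ge_limit[OF limit] using less.IH[OF _ less.prems] by blast
  qed
qed

theorem proposition2p3:
  fixes Z U :: "'s set"
  assumes "Z \<inter> U = {}"
      and "U \<noteq> {}"
  shows "(finite Z \<and> finite U \<longrightarrow>
            rs_eq Z U (all_theories Z U) (2 ^ card U)
          \<and> ds_eq Z U (all_theories Z U) (2 ^ card Z))
       \<and> (infinite (Z \<union> U) \<longrightarrow> (\<forall>a::'o::wellorder. rs_ge Z U (all_theories Z U) a))"
proof (rule conjI; intro impI allI)
  assume "finite Z \<and> finite U"
  then show "rs_eq Z U (all_theories Z U) (2 ^ card U) \<and> ds_eq Z U (all_theories Z U) (2 ^ card Z)"
    using rs_ds_finite_language by blast
next
  fix a :: "'o::wellorder"
  assume "infinite (Z \<union> U)"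
  then obtain sy :: "nat \<Rightarrow> 's" where sy: "inj sy" "range sy \<subseteq> Z \<union> U"
    using infinite_countable_subset by blast
  have "pattern_theories Z U sy [] \<subseteq> all_theories Z U"
    by (auto simp: pattern_theories_def theory_of_in_all_theories)
  then show "rs_ge Z U (all_theories Z U) a" by (rule rs_ge_pattern_theories[OF sy])
qed

end
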